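(* Let $(S,T_S)$ be a scaled simplicial set and let $p:X\to S$ be a $(0,1)$-fibration. Then for every vertex $s\in S$ the fibre $X_s$ is an $\infty$-category (i.e. every triangle of the $\infty$-bicategory $X_s$ is thin) if and only if every triangle of $X$ is lean.
   Context: MB simplicial sets $(X,E_X,T_X\subseteq C_X)$: simplicial set with marked edges and thin $\subseteq$ lean 2-simplices (containing degenerate ones); $\flat$ = degenerate only, $\sharp$ = all, $(X,E,T)$: thin = lean = $T$. Generating MB-anodyne maps: (A1) $(\Lambda^n_i,\flat,\flat\subseteq\{\Delta^{\{i-1,i,i+1\}}\})\to(\Delta^n,\flat,\flat\subseteq\{\Delta^{\{i-1,i,i+1\}}\})$, $n\ge2$, $0<i<n$; (A2) $(\Delta^4,\flat,\flat\subseteq T)\to(\Delta^4,\flat,\flat\subseteq T\cup\{\Delta^{\{0,3,4\}},\Delta^{\{0,1,4\}}\})$, $T=\{\Delta^{\{0,2,4\}},\Delta^{\{1,2,3\}},\Delta^{\{0,1,3\}},\Delta^{\{1,3,4\}},\Delta^{\{0,1,2\}}\}$; (A3) $(\Lambda^n_0,\{\Delta^{\{0,1\}}\},\{\Delta^{\{0,1,n\}}\})\to(\Delta^n,\{\Delta^{\{0,1\}}\},\{\Delta^{\{0,1,n\}}\})$, $n\ge2$; (A4) $(\Delta^0,\sharp,\sharp)\to(\Delta^1,\sharp,\sharp)$; (S1) $(\Delta^2,\{\Delta^{\{0,1\}},\Delta^{\{1,2\}}\},\sharp)\to(\Delta^2,\sharp,\sharp)$; (S2) $(\Delta^2,\flat,\flat\subseteq\sharp)\to(\Delta^2,\flat,\sharp)$;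 (E) $(K,\flat,\sharp)\to(K,\sharp,\sharp)$, $K$ Kan. MB-fibration: right lifting property against their weakly saturated closure. A $(0,1)$-fibration over $(S,T_S)$ is an MB-fibration $p:X\to(S,\sharp,T_S\subseteq\sharp)$. The fibre $X_s$ is the pullback along $s:\Delta^0\to S$; in it lean and thin triangles coincide and it is an $\infty$-bicategory (fibrant scaled simplicial set) with these thin triangles. *)

theory Defs
  imports Main
begin

text \<open>A simplicial set: sets of n-simplices together with the action of monotone maps
  theta : [m] -> [n] of the simplex category, act X theta m n : X_n -> X_m.\<close>

record 'a sset =
  simp :: "nat \<Rightarrow> 'a set"
  act  :: "(nat \<Rightarrow> nat) \<Rightarrow> nat \<Rightarrow> nat \<Rightarrow> 'a \<Rightarrow> 'a"

definition mono_map :: "(nat \<Rightarrow> nat) \<Rightarrow> nat \<Rightarrow> nat \<Rightarrow> bool" where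
  "mono_map \<theta> m n \<longleftrightarrow> (\<forall>i\<le>m. \<theta> i \<le> n) \<and> (\<forall>i j. i \<le> j \<and> j \<le> m \<longrightarrow> \<theta> i \<le> \<theta> j)"

definition is_sset :: "('a, 'z) sset_scheme \<Rightarrow> bool" where
  "is_sset X \<longleftrightarrow>
     (\<forall>\<theta> m n x. mono_map \<theta> m n \<and> x \<in> simp X n \<longrightarrow> act X \<theta> m n x \<in> simp X m)
   \<and> (\<forall>n x. x \<in> simp X n \<longrightarrow> act X id n n x = x)
   \<and> (\<forall>\<theta> \<psi> k m n x. mono_map \<theta> m n \<and> mono_map \<psi> k m \<and> x \<in> simp X n \<longrightarrow>
          act X (\<theta> \<circ> \<psi>) k n x = act X \<psi> k m (act X \<theta> m n x))
   \<and> (\<forall>\<theta> \<theta>' m n x. (\<forall>i\<le>m. \<theta> i = \<theta>' i) \<and> x \<in> simp X n \<longrightarrow>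
          act X \<theta> m n x = act X \<theta>' m n x)"

definition is_smap :: "('a, 'z) sset_scheme \<Rightarrow> ('b, 'w) sset_scheme \<Rightarrow> (nat \<Rightarrow> 'a \<Rightarrow> 'b) \<Rightarrow> bool" where
  "is_smap X Y f \<longleftrightarrow>
     (\<forall>n x. x \<in> simp X n \<longrightarrow> f n x \<in> simp Y n)
   \<and> (\<forall>\<theta> m n x. mono_map \<theta> m n \<and> x \<in> simp X n \<longrightarrow> f m (act X \<theta> m n x) = act Y \<theta> m n (f n x))"

definition sdeg :: "nat \<Rightarrow> nat \<Rightarrow> nat" where
  "sdeg j i = (if i \<le> j then i else i - 1)"

definition degenerate :: "('a, 'z) sset_scheme \<Rightarrow> nat \<Rightarrow> 'a \<Rightarrow> bool" where
  "degenerate X n x \<longleftrightarrow> 0 < n \<and> (\<exists>j<n. \<exists>y\<in>simp X (n - 1). x = act X (sdeg j) n (n - 1) y)"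

record 'a mbset = "'a sset" +
  marked :: "'a set"
  lean   :: "'a set"
  thin   :: "'a set"

definition is_mbset :: "'a mbset \<Rightarrow> bool" where
  "is_mbset X \<longleftrightarrow> is_sset X
     \<and> marked X \<subseteq> simp X 1 \<and> thin X \<subseteq> lean X \<and> lean X \<subseteq> simp X 2
     \<and> {x \<in> simp X 1. degenerate X 1 x} \<subseteq> marked X
     \<and> {x \<in> simp X 2. degenerate X 2 x} \<subseteq> thin X"

definition is_mbmap :: "'a mbset \<Rightarrow> 'b mbset \<Rightarrow> (nat \<Rightarrow> 'a \<Rightarrow> 'b) \<Rightarrow> bool" where
  "is_mbmap X Y f \<longleftrightarrow> is_smap X Y f
     \<and> f 1 ` marked X \<subseteq> marked Y \<and> f 2 ` lean X \<subseteq> lean Y \<and> f 2 ` thin X \<subseteq> thin Y"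

text \<open>m-simplices of Delta^n are nondecreasing lists of length m+1 with entries in {0..n};
  a (downward closed) predicate P on the vertex set cuts out a simplicial subset.\<close>

definition std_simps :: "(nat set \<Rightarrow> bool) \<Rightarrow> nat \<Rightarrow> nat \<Rightarrow> nat list set" where
  "std_simps P n m = {xs. length xs = Suc m \<and> sorted xs \<and> set xs \<subseteq> {..n} \<and> P (set xs)}"

definition mkstd :: "(nat set \<Rightarrow> bool) \<Rightarrow> nat \<Rightarrow> nat list set \<Rightarrow> nat list set \<Rightarrow> nat list set
                     \<Rightarrow> nat list mbset" where
  "mkstd P n E L T =
    \<lparr> simp = std_simps P n,
      act = (\<lambda>\<theta> m k xs. map (\<lambda>i. xs ! \<theta> i) [0..<Suc m]),
      marked = {xs \<in> std_simps P n 1. \<not> distinct xs \<or> xs \<in> E},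
      lean = {xs \<in> std_simps P n 2. \<not> distinct xs \<or> xs \<in> L},
      thin = {xs \<in> std_simps P n 2. \<not> distinct xs \<or> xs \<in> T} \<rparr>"

definition fullP :: "nat set \<Rightarrow> bool" where "fullP F = True"

definition hornP :: "nat \<Rightarrow> nat \<Rightarrow> nat set \<Rightarrow> bool" where
  "hornP n i F \<longleftrightarrow> \<not> ({..n} - {i} \<subseteq> F)"

definition vert0P :: "nat set \<Rightarrow> bool" where "vert0P F \<longleftrightarrow> F \<subseteq> {0}"

definition kan :: "'a sset \<Rightarrow> bool" where
  "kan K \<longleftrightarrow> is_sset K \<and>
    (\<forall>n k f. 1 \<le> n \<and> k \<le> n \<and> is_smap (mkstd (hornP n k) n {} {} {}) K f \<longrightarrow>
       (\<exists>g. is_smap (mkstd fullP n {} {} {}) K g \<and>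
            (\<forall>m x. x \<in> simp (mkstd (hornP n k) n {} {} {}) m \<longrightarrow> g m x = f m x)))"

definition flat_sharp :: "'a sset \<Rightarrow> 'a mbset" where
  "flat_sharp K = \<lparr> simp = simp K, act = act K, marked = {x \<in> simp K 1. degenerate K 1 x},
                    lean = simp K 2, thin = simp K 2 \<rparr>"

definition sharp_sharp :: "'a sset \<Rightarrow> 'a mbset" where
  "sharp_sharp K = \<lparr> simp = simp K, act = act K, marked = simp K 1,
                     lean = simp K 2, thin = simp K 2 \<rparr>"

text \<open>Right lifting property of p : X -> Y against the MB map A -> B whose underlying map
  is the identity/inclusion (simp A n is a subset of simp B n, same action).\<close>
definition rlp :: "'c mbset \<Rightarrow> 'c mbset \<Rightarrow> 'a mbset \<Rightarrow> 'b mbset \<Rightarrow> (nat \<Rightarrow> 'a \<Rightarrow> 'b) \<Rightarrow> bool" where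
  "rlp A B X Y p \<longleftrightarrow>
    (\<forall>u v. is_mbmap A X u \<and> is_mbmap B Y v \<and> (\<forall>n x. x \<in> simp A n \<longrightarrow> p n (u n x) = v n x) \<longrightarrow>
       (\<exists>h. is_mbmap B X h \<and> (\<forall>n x. x \<in> simp A n \<longrightarrow> h n x = u n x)
            \<and> (\<forall>n x. x \<in> simp B n \<longrightarrow> p n (h n x) = v n x)))"

definition A2T :: "nat list set" where
  "A2T = {[0,2,4], [1,2,3], [0,1,3], [1,3,4], [0,1,2]}"

definition mb_fibration :: "'a mbset \<Rightarrow> 'b mbset \<Rightarrow> (nat \<Rightarrow> 'a \<Rightarrow> 'b) \<Rightarrow> bool" where
  "mb_fibration X Y p \<longleftrightarrow> is_mbset X \<and> is_mbset Y \<and> is_mbmap X Y p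
   \<and> (\<forall>n i. 2 \<le> n \<and> 0 < i \<and> i < n \<longrightarrow>
        rlp (mkstd (hornP n i) n {} {[i - 1, i, i + 1]} {})
            (mkstd fullP n {} {[i - 1, i, i + 1]} {}) X Y p)
   \<and> rlp (mkstd fullP 4 {} A2T {}) (mkstd fullP 4 {} (A2T \<union> {[0,3,4], [0,1,4]}) {}) X Y p
   \<and> (\<forall>n. 2 \<le> n \<longrightarrow>
        rlp (mkstd (hornP n 0) n {[0,1]} {[0,1,n]} {[0,1,n]})
            (mkstd fullP n {[0,1]} {[0,1,n]} {[0,1,n]}) X Y p)
   \<and> rlp (mkstd vert0P 1 UNIV UNIV UNIV) (mkstd fullP 1 UNIV UNIV UNIV) X Y p
   \<and> rlp (mkstd fullP 2 {[0,1], [1,2]} UNIV UNIV) (mkstd fullP 2 UNIV UNIV UNIV) X Y p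
   \<and> rlp (mkstd fullP 2 {} UNIV {}) (mkstd fullP 2 {} UNIV UNIV) X Y p
   \<and> (\<forall>K :: nat sset. kan K \<longrightarrow> rlp (flat_sharp K) (sharp_sharp K) X Y p)"

definition is_scaled :: "'b sset \<Rightarrow> 'b set \<Rightarrow> bool" where
  "is_scaled S TS \<longleftrightarrow> is_sset S \<and> TS \<subseteq> simp S 2 \<and> {x \<in> simp S 2. degenerate S 2 x} \<subseteq> TS"

definition sharp_scaled :: "'b sset \<Rightarrow> 'b set \<Rightarrow> 'b mbset" where
  "sharp_scaled S TS = \<lparr> simp = simp S, act = act S, marked = simp S 1, lean = simp S 2, thin = TS \<rparr>"

definition zero_one_fibration :: "'b sset \<Rightarrow> 'b set \<Rightarrow> 'a mbset \<Rightarrow> (nat \<Rightarrow> 'a \<Rightarrow> 'b) \<Rightarrow> bool" where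
  "zero_one_fibration S TS X p \<longleftrightarrow> is_scaled S TS \<and> mb_fibration X (sharp_scaled S TS) p"

text \<open>The fibre X_s: pullback of p along s : Delta^0 -> S, realised as the simplices of X
  lying over the totally degenerate simplices on s, with the induced MB structure.\<close>
definition fibre :: "'b sset \<Rightarrow> 'a mbset \<Rightarrow> (nat \<Rightarrow> 'a \<Rightarrow> 'b) \<Rightarrow> 'b \<Rightarrow> 'a mbset" where
  "fibre S X p s =
    (let F = (\<lambda>n. {x \<in> simp X n. p n x = act S (\<lambda>_. 0) n 0 s}) in
     \<lparr> simp = F, act = act X, marked = marked X \<inter> F 1, lean = lean X \<inter> F 2,
       thin = thin X \<inter> F 2 \<rparr>)"

definition all_triangles_thin :: "'a mbset \<Rightarrow> bool" where
  "all_triangles_thin Y \<longleftrightarrow> simp Y 2 \<subseteq> thin Y"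

definition all_triangles_lean :: "'a mbset \<Rightarrow> bool" where
  "all_triangles_lean Y \<longleftrightarrow> simp Y 2 \<subseteq> lean Y"

end

theory Submission
  imports Defs
begin

text \<open>If every triangle of X is lean, a triangle in a fibre is lean and lies over a degenerate,
  hence thin, triangle of S, so it is thin by (S2).

  Conversely, assume the fibres are \<open>\<infinity>\<close>-categories. Applying (A2) to degenerate 4-simplices shows
  that a 3-simplex whose faces \<open>d\<^sub>0\<close>, \<open>d\<^sub>3\<close> and one of \<open>d\<^sub>1\<close>, \<open>d\<^sub>2\<close> are lean has its
  fourth face lean as well. A triangle \<open>\<delta>\<close> over a degenerate triangle \<open>s\<^sub>1 c\<close> is the face
  \<open>d\<^sub>1\<close> of a 3-simplex over \<open>s\<^sub>1 s\<^sub>1 c\<close> whose other faces are thin: \<open>d\<^sub>2\<close> and \<open>d\<^sub>3\<close> are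
  (A3)-fillers of 2-horns built on an (A4)-lift of c, and \<open>d\<^sub>0\<close> lies in a fibre. Finally an
  arbitrary triangle \<open>\<sigma>\<close> is the face \<open>d\<^sub>2\<close> of an (A1)-filler over \<open>s\<^sub>2 (p \<sigma>)\<close> whose face
  \<open>d\<^sub>3\<close> is a lean (A1)-filler of the inner 2-horn of \<open>\<sigma>\<close>, whose face \<open>d\<^sub>0\<close> is degenerate and
  whose face \<open>d\<^sub>1\<close> lies over a degenerate triangle.\<close>

lemma sset_act_in: "is_sset X \<Longrightarrow> mono_map \<theta> m n \<Longrightarrow> x \<in> simp X n \<Longrightarrow> act X \<theta> m n x \<in> simp X m"
  unfolding is_sset_def by blast

lemma sset_act_id: "is_sset X \<Longrightarrow> x \<in> simp X n \<Longrightarrow> act X id n n x = x"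
  unfolding is_sset_def by blast

lemma sset_act_comp:
  "is_sset X \<Longrightarrow> mono_map \<theta> m n \<Longrightarrow> mono_map \<psi> k m \<Longrightarrow> x \<in> simp X n \<Longrightarrow>
   act X (\<theta> \<circ> \<psi>) k n x = act X \<psi> k m (act X \<theta> m n x)"
  unfolding is_sset_def by blast

lemma sset_act_cong:
  "is_sset X \<Longrightarrow> (\<And>i. i \<le> m \<Longrightarrow> \<theta> i = \<theta>' i) \<Longrightarrow> x \<in> simp X n \<Longrightarrow> act X \<theta> m n x = act X \<theta>' m n x"
  unfolding is_sset_def by blast

lemma smap_in: "is_smap X Y f \<Longrightarrow> x \<in> simp X n \<Longrightarrow> f n x \<in> simp Y n"
  unfolding is_smap_def by blast

lemma smap_act:
  "is_smap X Y f \<Longrightarrow> mono_map \<theta> m n \<Longrightarrow> x \<in> simp X n \<Longrightarrow> f m (act X \<theta> m n x) = act Y \<theta> m n (f n x)"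
  unfolding is_smap_def by blast

lemma rlpD:
  assumes "rlp A B X Y p" "is_mbmap A X u" "is_mbmap B Y v" "\<And>n x. x \<in> simp A n \<Longrightarrow> p n (u n x) = v n x"
  obtains h where "is_mbmap B X h" "\<And>n x. x \<in> simp A n \<Longrightarrow> h n x = u n x"
    "\<And>n x. x \<in> simp B n \<Longrightarrow> p n (h n x) = v n x"
  using assms unfolding rlp_def by blast

subsection \<open>Simplices given by vertex lists\<close>

text \<open>A monotone map \<open>[m] \<rightarrow> [k]\<close> is encoded by the list of its values, exactly as the
  m-simplices of \<open>\<Delta>\<^sup>k\<close> are in \<^const>\<open>mkstd\<close>.\<close>

definition vertex_list :: "nat list \<Rightarrow> nat \<Rightarrow> nat \<Rightarrow> bool" where
  "vertex_list F m k \<longleftrightarrow> length F = Suc m \<and> sorted F \<and> set F \<subseteq> {..k}"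

definition act_list :: "('a, 'z) sset_scheme \<Rightarrow> nat \<Rightarrow> nat \<Rightarrow> nat list \<Rightarrow> 'a \<Rightarrow> 'a" where
  "act_list X m k F z = act X (\<lambda>i. F ! i) m k z"

lemma std_simps_iff: "xs \<in> std_simps P n m \<longleftrightarrow> vertex_list xs m n \<and> P (set xs)"
  by (auto simp: std_simps_def vertex_list_def)

lemma mkstd_sel [simp]:
  "simp (mkstd P n E L T) = std_simps P n"
  "act (mkstd P n E L T) = (\<lambda>\<theta> m k xs. map (\<lambda>i. xs ! \<theta> i) [0..<Suc m])"
  "marked (mkstd P n E L T) = {xs \<in> std_simps P n 1. \<not> distinct xs \<or> xs \<in> E}"
  "lean (mkstd P n E L T) = {xs \<in> std_simps P n 2. \<not> distinct xs \<or> xs \<in> L}"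
  "thin (mkstd P n E L T) = {xs \<in> std_simps P n 2. \<not> distinct xs \<or> xs \<in> T}"
  by (simp_all add: mkstd_def)

lemma upt_in_std_simps: "[0..<Suc n] \<in> std_simps fullP n n"
  by (auto simp: std_simps_def fullP_def simp del: upt_Suc)

lemma mono_map_nth: "vertex_list F m k \<Longrightarrow> mono_map (\<lambda>i. F ! i) m k"
  unfolding vertex_list_def mono_map_def
  by (auto simp: sorted_nth_mono) (metis atMost_iff le_imp_less_Suc nth_mem subsetD)

lemma act_list_in: "is_sset X \<Longrightarrow> z \<in> simp X k \<Longrightarrow> vertex_list F m k \<Longrightarrow> act_list X m k F z \<in> simp X m"
  unfolding act_list_def by (rule sset_act_in[OF _ mono_map_nth])

lemma vertex_list_map_nth:
  assumes "vertex_list G k l" "vertex_list F m k"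
  shows "vertex_list (map ((!) G) F) m l"
proof -
  have G: "length G = Suc k" "sorted G" "set G \<subseteq> {..l}"
    and F: "length F = Suc m" "sorted F" "set F \<subseteq> {..k}"
    using assms by (auto simp: vertex_list_def)
  have F_lt: "\<And>x. x \<in> set F \<Longrightarrow> x < length G" using F G by auto
  have "sorted (map ((!) G) F)"
    unfolding sorted_iff_nth_mono
    using F(2) F_lt G(2) by (auto intro!: sorted_nth_mono simp: sorted_iff_nth_mono)
  moreover have "set (map ((!) G) F) \<subseteq> set G" using F_lt by auto
  ultimately show ?thesis using F G unfolding vertex_list_def by auto
qed

lemma act_list_act_list:
  assumes X: "is_sset X" and z: "z \<in> simp X l" and G: "vertex_list G k l" and F: "vertex_list F m k"
  shows "act_list X m k F (act_list X k l G z) = act_list X m l (map ((!) G) F) z"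
proof -
  have "act_list X m k F (act_list X k l G z) = act X ((\<lambda>i. G ! i) \<circ> (\<lambda>i. F ! i)) m l z"
    unfolding act_list_def using sset_act_comp[OF X mono_map_nth[OF G] mono_map_nth[OF F] z] by simp
  also have "\<dots> = act_list X m l (map ((!) G) F) z"
    unfolding act_list_def by (rule sset_act_cong[OF X _ z]) (use F in \<open>auto simp: vertex_list_def\<close>)
  finally show ?thesis .
qed

lemma act_list_upt: "is_sset X \<Longrightarrow> z \<in> simp X k \<Longrightarrow> act_list X k k [0..<Suc k] z = z"
  unfolding act_list_def by (subst sset_act_cong[where \<theta>' = id]) (auto simp: sset_act_id simp del: upt_Suc)

lemma smap_act_list:
  "is_smap X Y f \<Longrightarrow> z \<in> simp X k \<Longrightarrow> vertex_list F m k \<Longrightarrow> f m (act_list X m k F z) = act_list Y m k F (f k z)"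
  unfolding act_list_def by (rule smap_act[OF _ mono_map_nth])

lemma is_smap_act_list:
  assumes X: "is_sset X" and z: "z \<in> simp X k"
  shows "is_smap (mkstd P k E L T) X (\<lambda>m xs. act_list X m k xs z)"
  unfolding is_smap_def
proof (intro conjI allI impI)
  fix n xs assume "xs \<in> simp (mkstd P k E L T) n"
  then show "act_list X n k xs z \<in> simp X n" by (auto simp: std_simps_iff act_list_in[OF X z])
next
  fix \<theta> m n xs assume "mono_map \<theta> m n \<and> xs \<in> simp (mkstd P k E L T) n"
  then have xs: "vertex_list xs n k" and \<theta>: "mono_map \<theta> m n" by (auto simp: std_simps_iff)
  have "act X \<theta> m n (act_list X n k xs z) = act X ((\<lambda>i. xs ! i) \<circ> \<theta>) m k z"
    unfolding act_list_def using sset_act_comp[OF X mono_map_nth[OF xs] \<theta> z] by simp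
  also have "\<dots> = act_list X m k (act (mkstd P k E L T) \<theta> m n xs) z"
    unfolding act_list_def by (rule sset_act_cong[OF X _ z]) (auto simp del: upt_Suc)
  finally show "act_list X m k (act (mkstd P k E L T) \<theta> m n xs) z = act X \<theta> m n (act_list X n k xs z)"
    by (rule sym)
qed

lemma smap_from_top:
  assumes h: "is_smap (mkstd fullP n E L T) X h" and xs: "vertex_list xs m n"
  shows "h m xs = act_list X m n xs (h n [0..<Suc n])"
proof -
  have top: "[0..<Suc n] \<in> simp (mkstd fullP n E L T) n" using upt_in_std_simps by simp
  have "xs = act (mkstd fullP n E L T) (\<lambda>i. xs ! i) m n [0..<Suc n]"
    using xs unfolding vertex_list_def
    by (intro nth_equalityI) (auto simp del: upt_Suc simp: nth_upt less_Suc_eq_le subset_iff)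
  then show ?thesis
    unfolding act_list_def using smap_act[OF h mono_map_nth[OF xs] top] by simp
qed

lemma sorted_not_distinct_adjacent:
  assumes "sorted xs" "\<not> distinct xs"
  obtains j where "Suc j < length xs" "xs ! j = xs ! Suc j"
proof -
  have "\<exists>j. Suc j < length xs \<and> xs ! j = xs ! Suc j"
  proof (rule ccontr)
    assume "\<nexists>j. Suc j < length xs \<and> xs ! j = xs ! Suc j"
    then have "\<forall>j. Suc j < length xs \<longrightarrow> xs ! j < xs ! Suc j"
      using assms(1) by (metis Suc_lessD le_less lessI sorted_nth_mono)
    then have "sorted_wrt (<) xs"
      by (simp add: sorted_wrt_iff_nth_Suc_transp[OF transp_on_less])
    then show False using assms(2) by (simp add: strict_sorted_iff)
  qed
  then show thesis using that by blast
qed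

lemma mono_map_sdeg: "j < m \<Longrightarrow> mono_map (sdeg j) m (m - 1)"
  unfolding mono_map_def sdeg_def by auto

text \<open>A non-injective sorted vertex list repeats two adjacent entries, so it is the degeneracy
  \<^term>\<open>sdeg j\<close> of the list with one of them deleted.\<close>

lemma smap_not_distinct_degenerate:
  assumes u: "is_smap (mkstd P n E L T) X u" and xs: "xs \<in> std_simps P n m" and nd: "\<not> distinct xs"
  shows "degenerate X m (u m xs)"
proof -
  have v: "length xs = Suc m" "sorted xs" "set xs \<subseteq> {..n}" "P (set xs)"
    using xs by (auto simp: std_simps_def)
  obtain j where j: "Suc j < length xs" "xs ! j = xs ! Suc j"
    using sorted_not_distinct_adjacent[OF v(2) nd] by blast
  have jm: "j < m" using j v by simp
  define ys where "ys = take j xs @ drop (Suc j) xs"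
  have ys_length: "length ys = m" using j v by (simp add: ys_def)
  have ys_nth: "\<And>k. k < m \<Longrightarrow> ys ! k = xs ! (if k < j then k else Suc k)"
    using j v by (auto simp: ys_def nth_append min_def)
  have "xs = take j xs @ xs ! j # drop (Suc j) xs"
    using id_take_nth_drop[OF Suc_lessD[OF j(1)]] .
  moreover have "xs ! Suc j \<in> set (drop (Suc j) xs)"
    using j by (metis Cons_nth_drop_Suc list.set_intros(1))
  ultimately have ys_set: "set ys = set xs"
    using j(2) unfolding ys_def by (metis Un_insert_right insert_absorb list.set(2) set_append)
  have "sorted ys"
    unfolding sorted_iff_nth_mono using ys_length ys_nth v(1,2) by (auto intro!: sorted_nth_mono)
  then have ys: "ys \<in> std_simps P n (m - 1)"
    using ys_length jm ys_set v by (auto simp: std_simps_def)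
  have "xs = act (mkstd P n E L T) (sdeg j) m (m - 1) ys"
    using v(1) ys_nth j(2) jm by (intro nth_equalityI) (auto simp: sdeg_def simp del: upt_Suc)
  then have "u m xs = act X (sdeg j) m (m - 1) (u (m - 1) ys)"
    using smap_act[OF u mono_map_sdeg[OF jm]] ys by simp
  moreover have "u (m - 1) ys \<in> simp X (m - 1)" using smap_in[OF u] ys by simp
  ultimately show ?thesis unfolding degenerate_def using jm by auto
qed

lemma act_list_degenerate:
  assumes "is_sset X" "z \<in> simp X k" "vertex_list F m k" "\<not> distinct F"
  shows "degenerate X m (act_list X m k F z)"
  using smap_not_distinct_degenerate[OF is_smap_act_list[OF assms(1,2), of fullP "{}" "{}" "{}"], of F m] assms(3,4)
  by (simp add: std_simps_iff fullP_def)

lemma mbset_sset: "is_mbset X \<Longrightarrow> is_sset X"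
  by (simp add: is_mbset_def)

lemma mbset_lean_in: "is_mbset X \<Longrightarrow> x \<in> lean X \<Longrightarrow> x \<in> simp X 2"
  unfolding is_mbset_def by auto

lemma mbset_marked_in: "is_mbset X \<Longrightarrow> x \<in> marked X \<Longrightarrow> x \<in> simp X 1"
  unfolding is_mbset_def by auto

lemma mbset_thin_lean: "is_mbset X \<Longrightarrow> x \<in> thin X \<Longrightarrow> x \<in> lean X"
  unfolding is_mbset_def by auto

lemma mbset_degenerate_marked: "is_mbset X \<Longrightarrow> x \<in> simp X 1 \<Longrightarrow> degenerate X 1 x \<Longrightarrow> x \<in> marked X"
  unfolding is_mbset_def by auto

lemma mbset_degenerate_thin: "is_mbset X \<Longrightarrow> x \<in> simp X 2 \<Longrightarrow> degenerate X 2 x \<Longrightarrow> x \<in> thin X"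
  unfolding is_mbset_def by auto

lemma act_list_degenerate_thin:
  "is_mbset X \<Longrightarrow> z \<in> simp X k \<Longrightarrow> vertex_list F 2 k \<Longrightarrow> \<not> distinct F \<Longrightarrow> act_list X 2 k F z \<in> thin X"
  by (meson act_list_degenerate act_list_in mbset_degenerate_thin mbset_sset)

lemma is_mbmapD:
  assumes "is_mbmap A X h"
  shows "is_smap A X h" "x \<in> marked A \<Longrightarrow> h 1 x \<in> marked X"
    "x \<in> lean A \<Longrightarrow> h 2 x \<in> lean X" "x \<in> thin A \<Longrightarrow> h 2 x \<in> thin X"
  using assms unfolding is_mbmap_def by auto

text \<open>Degenerate simplices of \<^const>\<open>mkstd\<close> go to degenerate, hence marked or thin, simplices,
  so only the nondegenerate decorations need checking.\<close>

lemma is_mbmap_mkstd: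
  assumes X: "is_mbset X" and u: "is_smap (mkstd P n E L T) X u"
    and "\<forall>xs\<in>std_simps P n 1. distinct xs \<and> xs \<in> E \<longrightarrow> u 1 xs \<in> marked X"
    and "\<forall>xs\<in>std_simps P n 2. distinct xs \<and> xs \<in> L \<longrightarrow> u 2 xs \<in> lean X"
    and "\<forall>xs\<in>std_simps P n 2. distinct xs \<and> xs \<in> T \<longrightarrow> u 2 xs \<in> thin X"
  shows "is_mbmap (mkstd P n E L T) X u"
proof -
  have "u 1 xs \<in> marked X" if xs: "xs \<in> std_simps P n 1" "\<not> distinct xs \<or> xs \<in> E" for xs
    using xs assms(3) mbset_degenerate_marked[OF X smap_in[OF u]] smap_not_distinct_degenerate[OF u xs(1)]
    by auto
  moreover have thin: "u 2 xs \<in> thin X" if xs: "xs \<in> std_simps P n 2" "\<not> distinct xs \<or> xs \<in> T" for xs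
    using xs assms(5) mbset_degenerate_thin[OF X smap_in[OF u]] smap_not_distinct_degenerate[OF u xs(1)]
    by auto
  moreover have "u 2 xs \<in> lean X" if xs: "xs \<in> std_simps P n 2" "\<not> distinct xs \<or> xs \<in> L" for xs
    using xs assms(4) thin[OF xs(1)] mbset_thin_lean[OF X] by auto
  ultimately show ?thesis
    using u unfolding is_mbmap_def by auto
qed

text \<open>The n-simplices \<open>\<omega>\<close> whose classifying map \<open>\<Delta>\<^sup>n \<rightarrow> X\<close> is an MB map from
  \<^term>\<open>mkstd fullP n E L T\<close>.\<close>

definition decorated :: "'a mbset \<Rightarrow> nat \<Rightarrow> nat list set \<Rightarrow> nat list set \<Rightarrow> nat list set \<Rightarrow> 'a \<Rightarrow> bool" where
  "decorated X n E L T \<omega> \<longleftrightarrow>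
     (\<forall>xs\<in>std_simps fullP n 1. distinct xs \<and> xs \<in> E \<longrightarrow> act_list X 1 n xs \<omega> \<in> marked X)
   \<and> (\<forall>xs\<in>std_simps fullP n 2. distinct xs \<and> xs \<in> L \<longrightarrow> act_list X 2 n xs \<omega> \<in> lean X)
   \<and> (\<forall>xs\<in>std_simps fullP n 2. distinct xs \<and> xs \<in> T \<longrightarrow> act_list X 2 n xs \<omega> \<in> thin X)"

lemma decorated_mbmap:
  "is_mbset X \<Longrightarrow> \<omega> \<in> simp X n \<Longrightarrow> decorated X n E L T \<omega> \<Longrightarrow>
   is_mbmap (mkstd fullP n E L T) X (\<lambda>m xs. act_list X m n xs \<omega>)"
  by (rule is_mbmap_mkstd[OF _ is_smap_act_list[OF mbset_sset]]) (auto simp: decorated_def)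

lemma mbmap_decorated:
  assumes h: "is_mbmap (mkstd fullP n E L T) X h"
  shows "decorated X n E L T (h n [0..<Suc n])"
  using is_mbmapD(2-4)[OF h] smap_from_top[OF is_mbmapD(1)[OF h]]
  by (auto simp: decorated_def std_simps_iff)

lemma decorated_lean:
  "decorated X n E L T \<omega> \<Longrightarrow> xs \<in> L \<Longrightarrow> vertex_list xs 2 n \<Longrightarrow> distinct xs \<Longrightarrow> act_list X 2 n xs \<omega> \<in> lean X"
  by (auto simp: decorated_def std_simps_iff fullP_def)

lemma decorated_thin:
  "decorated X n E L T \<omega> \<Longrightarrow> xs \<in> T \<Longrightarrow> vertex_list xs 2 n \<Longrightarrow> distinct xs \<Longrightarrow> act_list X 2 n xs \<omega> \<in> thin X"
  by (auto simp: decorated_def std_simps_iff fullP_def)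

subsection \<open>Faces of a simplex and gluing along them\<close>

text \<open>A face of \<open>\<Delta>\<^sup>n\<close> is a strictly increasing vertex list G; a simplex y of X of dimension
  \<^term>\<open>face_dim G\<close> is a map \<open>G \<rightarrow> X\<close>, whose restriction to a simplex xs with vertices
  in G is \<^term>\<open>face_act X G y m xs\<close>, obtained by renumbering the vertices of G as \<open>0, 1, \<dots>\<close>.\<close>

definition face_index :: "nat list \<Rightarrow> nat \<Rightarrow> nat" where
  "face_index G v = length (filter (\<lambda>j. j < v) G)"

definition face_dim :: "nat list \<Rightarrow> nat" where
  "face_dim G = length G - 1"

definition face_act :: "('a, 'z) sset_scheme \<Rightarrow> nat list \<Rightarrow> 'a \<Rightarrow> nat \<Rightarrow> nat list \<Rightarrow> 'a" where
  "face_act X G y m xs = act_list X m (face_dim G) (map (face_index G) xs) y"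

lemma face_dim_simps [simp]:
  "face_dim [a] = 0" "face_dim [a, b] = 1" "face_dim [a, b, c] = 2" "face_dim [a, b, c, d] = 3"
  "face_dim [a, b, c, d, e] = 4"
  by (simp_all add: face_dim_def)

lemma face_index_simps [simp]:
  "face_index [] v = 0" "face_index (a # G) v = (if a < v then face_index G v + 1 else face_index G v)"
  by (simp_all add: face_index_def)

lemma face_index_nth:
  assumes "sorted_wrt (<) G" "i < length G"
  shows "face_index G (G ! i) = i"
proof -
  have "{k. k < length G \<and> G ! k < G ! i} = {..<i}"
    using assms by (auto simp: sorted_wrt_nth_less) (metis linorder_neqE_nat order_less_asym sorted_wrt_nth_less)
  then show ?thesis unfolding face_index_def length_filter_conv_card by simp
qed

lemma face_index_in:
  assumes "sorted_wrt (<) G" "v \<in> set G"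
  shows "face_index G v < length G" "G ! face_index G v = v"
  using assms face_index_nth by (auto simp: in_set_conv_nth)

lemma face_index_mono: "v \<le> w \<Longrightarrow> face_index G v \<le> face_index G w"
  unfolding face_index_def by (induction G) auto

lemma vertex_list_face: "sorted_wrt (<) G \<Longrightarrow> G \<noteq> [] \<Longrightarrow> set G \<subseteq> {..n} \<Longrightarrow> vertex_list G (face_dim G) n"
  unfolding vertex_list_def face_dim_def by (auto simp: strict_sorted_iff)

lemma vertex_list_face_index:
  assumes "sorted_wrt (<) G" "vertex_list xs m n" "set xs \<subseteq> set G"
  shows "vertex_list (map (face_index G) xs) m (face_dim G)"
proof -
  have xs: "sorted xs" "length xs = Suc m" using assms(2) by (auto simp: vertex_list_def)
  have "sorted (map (face_index G) xs)"
    unfolding sorted_iff_nth_mono using xs by (auto intro!: face_index_mono sorted_nth_mono)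
  moreover have "set (map (face_index G) xs) \<subseteq> {..face_dim G}"
    using face_index_in(1)[OF assms(1)] assms(3) by (fastforce simp: face_dim_def)
  ultimately show ?thesis using xs unfolding vertex_list_def by simp
qed

lemma map_nth_face_index: "sorted_wrt (<) G \<Longrightarrow> set xs \<subseteq> set G \<Longrightarrow> map ((!) G) (map (face_index G) xs) = xs"
  by (induction xs) (auto simp: face_index_in)

lemma face_act_in:
  "is_sset X \<Longrightarrow> sorted_wrt (<) G \<Longrightarrow> y \<in> simp X (face_dim G) \<Longrightarrow> vertex_list xs m n \<Longrightarrow> set xs \<subseteq> set G \<Longrightarrow>
   face_act X G y m xs \<in> simp X m"
  unfolding face_act_def by (rule act_list_in[OF _ _ vertex_list_face_index])

lemma face_act_self:
  assumes "is_sset X" "sorted_wrt (<) G" "G \<noteq> []" "y \<in> simp X (face_dim G)"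
  shows "face_act X G y (face_dim G) G = y"
proof -
  have "map (face_index G) G = [0..<Suc (face_dim G)]"
    using assms(2,3) by (intro nth_equalityI) (auto simp: face_index_nth face_dim_def simp del: upt_Suc)
  then show ?thesis unfolding face_act_def using act_list_upt[OF assms(1,4)] by simp
qed

lemma vertex_list_act:
  assumes "vertex_list xs m n" "mono_map \<theta> m' m"
  shows "vertex_list (map (\<lambda>i. xs ! \<theta> i) [0..<Suc m']) m' n"
    and "set (map (\<lambda>i. xs ! \<theta> i) [0..<Suc m']) \<subseteq> set xs"
proof -
  have "vertex_list (map \<theta> [0..<Suc m']) m' m"
    using assms(2) unfolding vertex_list_def mono_map_def sorted_iff_nth_mono by (auto simp del: upt_Suc)
  then have "vertex_list (map ((!) xs) (map \<theta> [0..<Suc m'])) m' n"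
    by (rule vertex_list_map_nth[OF assms(1)])
  then show "vertex_list (map (\<lambda>i. xs ! \<theta> i) [0..<Suc m']) m' n"
    by (simp add: comp_def del: upt_Suc)
  have "\<And>i. i < Suc m' \<Longrightarrow> \<theta> i < length xs"
    using assms unfolding vertex_list_def mono_map_def by (simp add: less_Suc_eq_le)
  then show "set (map (\<lambda>i. xs ! \<theta> i) [0..<Suc m']) \<subseteq> set xs"
    by (auto simp del: upt_Suc)
qed

lemma face_act_act:
  assumes X: "is_sset X" and G: "sorted_wrt (<) G" and y: "y \<in> simp X (face_dim G)"
    and xs: "vertex_list xs m n" "set xs \<subseteq> set G" and \<theta>: "mono_map \<theta> m' m"
  shows "face_act X G y m' (map (\<lambda>i. xs ! \<theta> i) [0..<Suc m']) = act X \<theta> m' m (face_act X G y m xs)"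
proof -
  have ixs: "map (face_index G) xs \<in> simp (mkstd fullP (face_dim G) {} {} {}) m"
    using vertex_list_face_index[OF G xs] by (simp add: std_simps_iff fullP_def)
  have "\<And>i. i \<le> m' \<Longrightarrow> \<theta> i < length xs" using \<theta> xs(1) unfolding mono_map_def vertex_list_def by auto
  then have eq: "map (face_index G) (map (\<lambda>i. xs ! \<theta> i) [0..<Suc m'])
      = map (\<lambda>i. map (face_index G) xs ! \<theta> i) [0..<Suc m']"
    by (auto simp del: upt_Suc)
  then show ?thesis
    unfolding face_act_def eq using smap_act[OF is_smap_act_list[OF X y] \<theta> ixs] by simp
qed

lemma face_act_restrict:
  assumes X: "is_sset X" and G: "sorted_wrt (<) G" "set G \<subseteq> {..n}"
    and C: "sorted_wrt (<) C" "C \<noteq> []" "set C \<subseteq> set G"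
    and y: "y \<in> simp X (face_dim G)" and xs: "vertex_list xs m n" "set xs \<subseteq> set C"
  shows "face_act X G y m xs = face_act X C (face_act X G y (face_dim C) C) m xs"
proof -
  have "vertex_list C (face_dim C) n" using vertex_list_face[OF C(1,2)] C(3) G(2) by auto
  then have GC: "vertex_list (map (face_index G) C) (face_dim C) (face_dim G)"
    by (rule vertex_list_face_index[OF G(1) _ C(3)])
  have "face_act X C (face_act X G y (face_dim C) C) m xs
      = act_list X m (face_dim G) (map ((!) (map (face_index G) C)) (map (face_index C) xs)) y"
    unfolding face_act_def by (rule act_list_act_list[OF X y GC vertex_list_face_index[OF C(1) xs]])
  also have "map ((!) (map (face_index G) C)) (map (face_index C) xs)
      = map (face_index G) (map ((!) C) (map (face_index C) xs))"
    using face_index_in(1)[OF C(1)] xs(2) by auto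
  also have "\<dots> = map (face_index G) xs" using map_nth_face_index[OF C(1) xs(2)] by simp
  finally show ?thesis unfolding face_act_def by simp
qed

lemma smap_face_act:
  assumes p: "is_smap X Y p" and Y: "is_sset Y"
    and G: "sorted_wrt (<) G" "G \<noteq> []" "set G \<subseteq> {..n}" and y: "y \<in> simp X (face_dim G)"
    and py: "p (face_dim G) y = act_list Y (face_dim G) n G \<beta>" and \<beta>: "\<beta> \<in> simp Y n"
    and xs: "vertex_list xs m n" "set xs \<subseteq> set G"
  shows "p m (face_act X G y m xs) = act_list Y m n xs \<beta>"
proof -
  have ixs: "vertex_list (map (face_index G) xs) m (face_dim G)" by (rule vertex_list_face_index[OF G(1) xs])
  have "p m (face_act X G y m xs) = act_list Y m (face_dim G) (map (face_index G) xs) (act_list Y (face_dim G) n G \<beta>)"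
    unfolding face_act_def using smap_act_list[OF p y ixs] py by simp
  also have "\<dots> = act_list Y m n (map ((!) G) (map (face_index G) xs)) \<beta>"
    by (rule act_list_act_list[OF Y \<beta> vertex_list_face[OF G] ixs])
  finally show ?thesis using map_nth_face_index[OF G(1) xs(2)] by simp
qed

text \<open>A horn, or any simplicial subset of \<open>\<Delta>\<^sup>n\<close> cut out by P, is presented by a list FL of faces
  G with simplices y that agree on common subfaces and cover it.\<close>

definition face_family :: "('a, 'z) sset_scheme \<Rightarrow> nat \<Rightarrow> (nat set \<Rightarrow> bool) \<Rightarrow> (nat list \<times> 'a) list \<Rightarrow> bool" where
  "face_family X n P FL \<longleftrightarrow> (\<forall>(G, y)\<in>set FL. sorted_wrt (<) G \<and> G \<noteq> [] \<and> set G \<subseteq> {..n} \<and> P (set G)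
      \<and> y \<in> simp X (face_dim G))"

definition compatible_faces :: "('a, 'z) sset_scheme \<Rightarrow> nat \<Rightarrow> (nat list \<times> 'a) list \<Rightarrow> bool" where
  "compatible_faces X n FL \<longleftrightarrow> (\<forall>(G, y)\<in>set FL. \<forall>(H, z)\<in>set FL. \<forall>m xs.
      vertex_list xs m n \<and> set xs \<subseteq> set G \<and> set xs \<subseteq> set H \<longrightarrow> face_act X G y m xs = face_act X H z m xs)"

definition faces_cover :: "(nat set \<Rightarrow> bool) \<Rightarrow> nat \<Rightarrow> (nat list \<times> 'a) list \<Rightarrow> bool" where
  "faces_cover P n FL \<longleftrightarrow> (\<forall>m xs. xs \<in> std_simps P n m \<longrightarrow> (\<exists>(G, y)\<in>set FL. set xs \<subseteq> set G))"

fun glue :: "('a, 'z) sset_scheme \<Rightarrow> (nat list \<times> 'a) list \<Rightarrow> nat \<Rightarrow> nat list \<Rightarrow> 'a" where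
  "glue X [] m xs = undefined"
| "glue X ((G, y) # FL) m xs = (if set xs \<subseteq> set G then face_act X G y m xs else glue X FL m xs)"

lemma face_familyD:
  "face_family X n P FL \<Longrightarrow> (G, y) \<in> set FL \<Longrightarrow>
   sorted_wrt (<) G \<and> G \<noteq> [] \<and> set G \<subseteq> {..n} \<and> P (set G) \<and> y \<in> simp X (face_dim G)"
  unfolding face_family_def by auto

lemma compatible_facesD:
  "compatible_faces X n FL \<Longrightarrow> (G, y) \<in> set FL \<Longrightarrow> (H, z) \<in> set FL \<Longrightarrow>
   vertex_list xs m n \<Longrightarrow> set xs \<subseteq> set G \<Longrightarrow> set xs \<subseteq> set H \<Longrightarrow> face_act X G y m xs = face_act X H z m xs"
  unfolding compatible_faces_def by fastforce

lemma compatible_faces_Cons: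
  assumes "compatible_faces X n (F # FL)"
  shows "compatible_faces X n FL"
  unfolding compatible_faces_def by (auto intro: compatible_facesD[OF assms])

lemma glue_eq:
  "compatible_faces X n FL \<Longrightarrow> (G, y) \<in> set FL \<Longrightarrow> vertex_list xs m n \<Longrightarrow> set xs \<subseteq> set G \<Longrightarrow>
   glue X FL m xs = face_act X G y m xs"
proof (induction FL)
  case (Cons F FL)
  obtain G' y' where F: "F = (G', y')" by fastforce
  show ?case
  proof (cases "set xs \<subseteq> set G'")
    case True
    then show ?thesis using compatible_facesD[OF Cons.prems(1) _ Cons.prems(2,3) True Cons.prems(4)] F by simp
  next
    case False
    then have "(G, y) \<in> set FL" using Cons.prems(2,4) F by auto
    then show ?thesis
      using Cons.IH[OF compatible_faces_Cons[OF Cons.prems(1)]] Cons.prems(3,4) False F by simp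
  qed
qed simp

lemma glue_cases:
  assumes "compatible_faces X n FL" "faces_cover P n FL" "xs \<in> std_simps P n m"
  obtains G y where "(G, y) \<in> set FL" "set xs \<subseteq> set G" "glue X FL m xs = face_act X G y m xs"
proof -
  obtain G y where "(G, y) \<in> set FL" "set xs \<subseteq> set G"
    using assms(2,3) unfolding faces_cover_def by blast
  then show thesis using that glue_eq[OF assms(1)] assms(3) by (simp add: std_simps_iff)
qed

lemma compatible_facesI:
  assumes X: "is_sset X" and FL: "face_family X n P FL"
    and common: "\<forall>(G, y)\<in>set FL. \<forall>(H, z)\<in>set FL. filter (\<lambda>v. v \<in> set H) G \<noteq> [] \<longrightarrow>
      face_act X G y (face_dim (filter (\<lambda>v. v \<in> set H) G)) (filter (\<lambda>v. v \<in> set H) G)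
    = face_act X H z (face_dim (filter (\<lambda>v. v \<in> set H) G)) (filter (\<lambda>v. v \<in> set H) G)"
  shows "compatible_faces X n FL"
  unfolding compatible_faces_def
proof (intro ballI allI impI, clarify)
  fix G y H z m xs
  assume G: "(G, y) \<in> set FL" and H: "(H, z) \<in> set FL"
    and xs: "vertex_list xs m n" "set xs \<subseteq> set G" "set xs \<subseteq> set H"
  define C where "C = filter (\<lambda>v. v \<in> set H) G"
  have G': "sorted_wrt (<) G" "G \<noteq> []" "set G \<subseteq> {..n}" "y \<in> simp X (face_dim G)"
    using face_familyD[OF FL G] by auto
  have H': "sorted_wrt (<) H" "H \<noteq> []" "set H \<subseteq> {..n}" "z \<in> simp X (face_dim H)"
    using face_familyD[OF FL H] by auto
  have C_set: "set C = set G \<inter> set H" unfolding C_def by auto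
  have "xs \<noteq> []" using xs(1) by (auto simp: vertex_list_def)
  then have C_ne: "C \<noteq> []" using C_set xs(2,3) by (cases xs) auto
  have C_sorted: "sorted_wrt (<) C" unfolding C_def by (rule sorted_wrt_filter[OF G'(1)])
  have xs_C: "set xs \<subseteq> set C" using C_set xs by auto
  have "face_act X G y m xs = face_act X C (face_act X G y (face_dim C) C) m xs"
    by (rule face_act_restrict[OF X G'(1,3) C_sorted C_ne _ G'(4) xs(1) xs_C]) (simp add: C_set)
  also have "face_act X G y (face_dim C) C = face_act X H z (face_dim C) C"
    using common G H C_ne unfolding C_def by fastforce
  also have "face_act X C (face_act X H z (face_dim C) C) m xs = face_act X H z m xs"
    by (rule face_act_restrict[symmetric, OF X H'(1,3) C_sorted C_ne _ H'(4) xs(1) xs_C]) (simp add: C_set)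
  finally show "face_act X G y m xs = face_act X H z m xs" .
qed

lemma compatible_faces_single: "is_sset X \<Longrightarrow> face_family X n P [(G, y)] \<Longrightarrow> compatible_faces X n [(G, y)]"
  by (rule compatible_facesI) auto

lemma hornP_I: "j \<le> n \<Longrightarrow> j \<noteq> i \<Longrightarrow> j \<notin> F \<Longrightarrow> hornP n i F"
  unfolding hornP_def by auto

lemma faces_cover_horn:
  assumes "\<forall>j\<in>{..n} - {i}. \<exists>(G, y)\<in>set FL. {..n} - {j} \<subseteq> set G"
  shows "faces_cover (hornP n i) n FL"
  unfolding faces_cover_def
proof (intro allI impI)
  fix m xs assume "xs \<in> std_simps (hornP n i) n m"
  then obtain j where j: "j \<in> {..n} - {i}" "j \<notin> set xs" and xs: "set xs \<subseteq> {..n}"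
    unfolding std_simps_def hornP_def by blast
  obtain G y where "(G, y) \<in> set FL" "{..n} - {j} \<subseteq> set G" using assms j(1) by blast
  moreover have "set xs \<subseteq> {..n} - {j}" using j(2) xs by blast
  ultimately show "\<exists>(G, y)\<in>set FL. set xs \<subseteq> set G" by blast
qed

lemma glue_smap:
  assumes X: "is_sset X" and FL: "face_family X n P FL" "compatible_faces X n FL" "faces_cover P n FL"
  shows "is_smap (mkstd P n E L T) X (glue X FL)"
  unfolding is_smap_def
proof (intro conjI allI impI)
  fix m xs assume "xs \<in> simp (mkstd P n E L T) m"
  then have xs: "xs \<in> std_simps P n m" by simp
  then obtain G y where G: "(G, y) \<in> set FL" "set xs \<subseteq> set G" "glue X FL m xs = face_act X G y m xs"
    using glue_cases[OF FL(2,3)] by blast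
  have "sorted_wrt (<) G" "y \<in> simp X (face_dim G)" using face_familyD[OF FL(1) G(1)] by auto
  moreover have "vertex_list xs m n" using xs by (simp add: std_simps_iff)
  ultimately show "glue X FL m xs \<in> simp X m"
    unfolding G(3) by (rule face_act_in[OF X _ _ _ G(2)])
next
  fix \<theta> m' m xs assume "mono_map \<theta> m' m \<and> xs \<in> simp (mkstd P n E L T) m"
  then have xs: "xs \<in> std_simps P n m" and \<theta>: "mono_map \<theta> m' m" by auto
  then obtain G y where G: "(G, y) \<in> set FL" "set xs \<subseteq> set G" "glue X FL m xs = face_act X G y m xs"
    using glue_cases[OF FL(2,3)] by blast
  have v: "vertex_list xs m n" using xs by (simp add: std_simps_iff)
  have G': "sorted_wrt (<) G" "y \<in> simp X (face_dim G)" using face_familyD[OF FL(1) G(1)] by auto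
  note xs\<theta> = vertex_list_act[OF v \<theta>]
  have "glue X FL m' (map (\<lambda>i. xs ! \<theta> i) [0..<Suc m']) = face_act X G y m' (map (\<lambda>i. xs ! \<theta> i) [0..<Suc m'])"
    using glue_eq[OF FL(2) G(1) xs\<theta>(1)] xs\<theta>(2) G(2) by blast
  also have "\<dots> = act X \<theta> m' m (glue X FL m xs)"
    unfolding G(3) by (rule face_act_act[OF X G' v G(2) \<theta>])
  finally show "glue X FL m' (act (mkstd P n E L T) \<theta> m' m xs) = act X \<theta> m' m (glue X FL m xs)"
    by simp
qed

definition faces_decorated ::
  "'a mbset \<Rightarrow> (nat set \<Rightarrow> bool) \<Rightarrow> nat \<Rightarrow> nat list set \<Rightarrow> nat list set \<Rightarrow> nat list set \<Rightarrow> (nat list \<times> 'a) list \<Rightarrow> bool"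
where
  "faces_decorated X P n E L T FL \<longleftrightarrow> (\<forall>(G, y)\<in>set FL. \<forall>xs.
       (xs \<in> std_simps P n 1 \<and> distinct xs \<and> xs \<in> E \<and> set xs \<subseteq> set G \<longrightarrow> face_act X G y 1 xs \<in> marked X)
     \<and> (xs \<in> std_simps P n 2 \<and> distinct xs \<and> xs \<in> L \<and> set xs \<subseteq> set G \<longrightarrow> face_act X G y 2 xs \<in> lean X)
     \<and> (xs \<in> std_simps P n 2 \<and> distinct xs \<and> xs \<in> T \<and> set xs \<subseteq> set G \<longrightarrow> face_act X G y 2 xs \<in> thin X))"

lemma glue_mbmap:
  assumes X: "is_mbset X" and FL: "face_family X n P FL" "compatible_faces X n FL" "faces_cover P n FL"
    and FL_decorated: "faces_decorated X P n E L T FL"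
  shows "is_mbmap (mkstd P n E L T) X (glue X FL)"
proof -
  have glue_in: "glue X FL k xs \<in> D"
    if "xs \<in> std_simps P n k" "\<forall>(G, y)\<in>set FL. set xs \<subseteq> set G \<longrightarrow> face_act X G y k xs \<in> D" for xs k D
    using glue_cases[OF FL(2,3) that(1)] that(2) by fastforce
  show ?thesis
    by (rule is_mbmap_mkstd[OF X glue_smap[OF mbset_sset[OF X] FL]])
      (use FL_decorated in \<open>auto intro!: glue_in simp: faces_decorated_def\<close>)
qed

lemma smap_glue:
  assumes p: "is_smap X Y p" and Y: "is_sset Y"
    and FL: "face_family X n P FL" "compatible_faces X n FL" "faces_cover P n FL"
    and \<beta>: "\<beta> \<in> simp Y n" and over: "\<forall>(G, y)\<in>set FL. p (face_dim G) y = act_list Y (face_dim G) n G \<beta>"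
    and xs: "xs \<in> std_simps P n m"
  shows "p m (glue X FL m xs) = act_list Y m n xs \<beta>"
proof -
  obtain G y where G: "(G, y) \<in> set FL" "set xs \<subseteq> set G" "glue X FL m xs = face_act X G y m xs"
    by (rule glue_cases[OF FL(2,3) xs])
  have "sorted_wrt (<) G" "G \<noteq> []" "set G \<subseteq> {..n}" "y \<in> simp X (face_dim G)"
    using face_familyD[OF FL(1) G(1)] by auto
  then show ?thesis
    unfolding G(3) using smap_face_act[OF p Y] over G(1,2) \<beta> xs by (fastforce simp: std_simps_iff)
qed

lemma glue_face:
  assumes X: "is_sset X" and FL: "face_family X n P FL" "compatible_faces X n FL" and G: "(G, y) \<in> set FL"
  shows "glue X FL (face_dim G) G = y"
proof -
  have G': "sorted_wrt (<) G" "G \<noteq> []" "set G \<subseteq> {..n}" "y \<in> simp X (face_dim G)"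
    using face_familyD[OF FL(1) G] by auto
  show ?thesis
    unfolding glue_eq[OF FL(2) G vertex_list_face[OF G'(1-3)] order_refl] by (rule face_act_self[OF X G'(1,2,4)])
qed

text \<open>Lifting against \<open>(\<Delta>\<^sup>n|P, E, L, T) \<rightarrow> (\<Delta>\<^sup>n, E', L', T')\<close>: the map out of the source is glued
  from the faces in FL, and the lift is represented by the n-simplex \<open>\<omega>\<close>.\<close>

lemma rlp_fill:
  assumes lift: "rlp (mkstd P n E L T) (mkstd fullP n E' L' T') X Y p"
    and X: "is_mbset X" and Y: "is_mbset Y" and p: "is_smap X Y p"
    and FL: "face_family X n P FL" "compatible_faces X n FL" "faces_cover P n FL"
    and FL_decorated: "faces_decorated X P n E L T FL"
    and \<beta>: "\<beta> \<in> simp Y n" "decorated Y n E' L' T' \<beta>"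
    and over: "\<forall>(G, y)\<in>set FL. p (face_dim G) y = act_list Y (face_dim G) n G \<beta>"
  obtains \<omega> where "\<omega> \<in> simp X n" "p n \<omega> = \<beta>" "\<forall>(G, y)\<in>set FL. act_list X (face_dim G) n G \<omega> = y"
    "decorated X n E' L' T' \<omega>"
proof -
  have sX: "is_sset X" and sY: "is_sset Y" using X Y by (simp_all add: mbset_sset)
  obtain h where h: "is_mbmap (mkstd fullP n E' L' T') X h"
    "\<And>m xs. xs \<in> simp (mkstd P n E L T) m \<Longrightarrow> h m xs = glue X FL m xs"
    "\<And>m xs. xs \<in> simp (mkstd fullP n E' L' T') m \<Longrightarrow> p m (h m xs) = act_list Y m n xs \<beta>"
    using rlpD[OF lift glue_mbmap[OF X FL FL_decorated] decorated_mbmap[OF Y \<beta>]]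
      smap_glue[OF p sY FL \<beta>(1) over] by auto
  define \<omega> where "\<omega> = h n [0..<Suc n]"
  have top: "[0..<Suc n] \<in> simp (mkstd fullP n E' L' T') n" using upt_in_std_simps by simp
  show thesis
  proof
    show "\<omega> \<in> simp X n" unfolding \<omega>_def by (rule smap_in[OF is_mbmapD(1)[OF h(1)] top])
    show "p n \<omega> = \<beta>" using h(3)[OF top] act_list_upt[OF sY \<beta>(1)] unfolding \<omega>_def by simp
    show "decorated X n E' L' T' \<omega>" unfolding \<omega>_def by (rule mbmap_decorated[OF h(1)])
    show "\<forall>(G, y)\<in>set FL. act_list X (face_dim G) n G \<omega> = y"
    proof clarify
      fix G y assume G: "(G, y) \<in> set FL"
      then have "vertex_list G (face_dim G) n" "P (set G)"
        using face_familyD[OF FL(1)] vertex_list_face by blast+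
      then show "act_list X (face_dim G) n G \<omega> = y"
        using smap_from_top[OF is_mbmapD(1)[OF h(1)]] h(2) glue_face[OF sX FL(1,2) G]
        unfolding \<omega>_def by (simp add: std_simps_iff)
    qed
  qed
qed

lemma upt_Suc_small: "[0..<Suc 1] = [0, 1]" "[0..<Suc 2] = [0, 1, 2]" "[0..<Suc 4] = [0, 1, 2, 3, 4]"
  by (simp_all add: upt_rec)

lemma atMost_small: "{..2::nat} = {0, 1, 2}" "{..3::nat} = {0, 1, 2, 3}"
  by auto

lemma std_simps_top_distinct:
  assumes "xs \<in> std_simps P n n" "distinct xs"
  shows "xs = [0..<Suc n]"
proof -
  have xs: "length xs = Suc n" "sorted xs" "set xs \<subseteq> {..n}" using assms(1) by (auto simp: std_simps_def)
  have "card (set xs) = Suc n" using distinct_card[OF assms(2)] xs by simp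
  then have "set xs = {..n}" using xs(3) by (intro card_subset_eq) auto
  moreover have "set [0..<Suc n] = {..n}" by auto
  ultimately show ?thesis using xs(2) assms(2)
    by (intro sorted_distinct_set_unique) (simp_all del: upt_Suc)
qed

lemma decorated_edge_iff:
  assumes "is_sset X" "x \<in> simp X 1"
  shows "decorated X 1 E L T x \<longleftrightarrow> ([0, 1] \<in> E \<longrightarrow> x \<in> marked X)"
proof -
  have no_triangle: "\<not> distinct xs" if "xs \<in> std_simps fullP 1 2" for xs
  proof
    assume "distinct xs"
    then have "card (set xs) = 3" "set xs \<subseteq> {..1}" using that by (auto simp: std_simps_def distinct_card)
    then show False using card_mono[of "{..1::nat}" "set xs"] by simp
  qed
  have edge: "xs = [0, 1]" if "xs \<in> std_simps fullP 1 1" "distinct xs" for xs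
    using std_simps_top_distinct[OF that] by (simp only: upt_Suc_small)
  have top: "[0, 1] \<in> std_simps fullP 1 1" "act_list X 1 1 [0, 1] x = x"
    using upt_in_std_simps[of 1] act_list_upt[OF assms] by (simp_all only: upt_Suc_small)
  have "(\<forall>xs\<in>std_simps fullP 1 1. distinct xs \<and> xs \<in> E \<longrightarrow> act_list X 1 1 xs x \<in> marked X)
      \<longleftrightarrow> ([0, 1] \<in> E \<longrightarrow> x \<in> marked X)"
  proof
    assume H: "\<forall>xs\<in>std_simps fullP 1 1. distinct xs \<and> xs \<in> E \<longrightarrow> act_list X 1 1 xs x \<in> marked X"
    show "[0, 1] \<in> E \<longrightarrow> x \<in> marked X" using H[rule_format, OF top(1)] top(2) by simp
  qed (use edge top(2) in auto)
  then show ?thesis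
    unfolding decorated_def using no_triangle by blast
qed

lemma decorated_triangle_iff:
  assumes "is_sset X" "x \<in> simp X 2"
  shows "decorated X 2 {} L T x \<longleftrightarrow> ([0, 1, 2] \<in> L \<longrightarrow> x \<in> lean X) \<and> ([0, 1, 2] \<in> T \<longrightarrow> x \<in> thin X)"
proof -
  have triangle: "xs = [0, 1, 2]" if "xs \<in> std_simps fullP 2 2" "distinct xs" for xs
    using std_simps_top_distinct[OF that] by (simp only: upt_Suc_small)
  have top: "[0, 1, 2] \<in> std_simps fullP 2 2" "act_list X 2 2 [0, 1, 2] x = x"
    using upt_in_std_simps[of 2] act_list_upt[OF assms] by (simp_all only: upt_Suc_small)
  have "(\<forall>xs\<in>std_simps fullP 2 2. distinct xs \<and> xs \<in> D \<longrightarrow> act_list X 2 2 xs x \<in> Z)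
      \<longleftrightarrow> ([0, 1, 2] \<in> D \<longrightarrow> x \<in> Z)" for D Z
  proof
    assume H: "\<forall>xs\<in>std_simps fullP 2 2. distinct xs \<and> xs \<in> D \<longrightarrow> act_list X 2 2 xs x \<in> Z"
    show "[0, 1, 2] \<in> D \<longrightarrow> x \<in> Z" using H[rule_format, OF top(1)] top(2) by simp
  qed (use triangle top(2) in auto)
  then show ?thesis
    unfolding decorated_def by simp
qed

lemma rlp_full_decorated:
  assumes lift: "rlp (mkstd fullP n E L T) (mkstd fullP n E' L' T') X Y p"
    and X: "is_mbset X" and Y: "is_mbset Y" and p: "is_smap X Y p"
    and \<tau>: "\<tau> \<in> simp X n" "decorated X n E L T \<tau>" and p\<tau>: "decorated Y n E' L' T' (p n \<tau>)"
  shows "decorated X n E' L' T' \<tau>"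
proof -
  have "p m (act_list X m n xs \<tau>) = act_list Y m n xs (p n \<tau>)" if "xs \<in> simp (mkstd fullP n E L T) m" for m xs
    using smap_act_list[OF p \<tau>(1)] that by (simp add: std_simps_iff)
  then obtain h where h: "is_mbmap (mkstd fullP n E' L' T') X h"
    "\<And>m xs. xs \<in> simp (mkstd fullP n E L T) m \<Longrightarrow> h m xs = act_list X m n xs \<tau>"
    using rlpD[OF lift decorated_mbmap[OF X \<tau>] decorated_mbmap[OF Y smap_in[OF p \<tau>(1)] p\<tau>]] by metis
  have "h n [0..<Suc n] = \<tau>"
    using h(2) upt_in_std_simps act_list_upt[OF mbset_sset[OF X] \<tau>(1)] by simp
  then show ?thesis using mbmap_decorated[OF h(1)] by simp
qed

subsection \<open>Fibrations over a base with all edges marked and all triangles lean\<close>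

locale sharp_base_fibration =
  fixes X :: "'a mbset" and Y :: "'b mbset" and p :: "nat \<Rightarrow> 'a \<Rightarrow> 'b"
  assumes fibration: "mb_fibration X Y p"
    and marked_Y: "marked Y = simp Y 1"
    and lean_Y: "lean Y = simp Y 2"
begin

lemma X_mbset: "is_mbset X" and Y_mbset: "is_mbset Y" and p_smap: "is_smap X Y p"
  using fibration unfolding mb_fibration_def is_mbmap_def by auto

lemma X_sset: "is_sset X" and Y_sset: "is_sset Y"
  using X_mbset Y_mbset by (simp_all add: mbset_sset)

lemma rlp_A1: "0 < i \<Longrightarrow> i < n \<Longrightarrow>
    rlp (mkstd (hornP n i) n {} {[i - 1, i, i + 1]} {}) (mkstd fullP n {} {[i - 1, i, i + 1]} {}) X Y p"
  and rlp_A2: "rlp (mkstd fullP 4 {} A2T {}) (mkstd fullP 4 {} (A2T \<union> {[0, 3, 4], [0, 1, 4]}) {}) X Y p"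
  and rlp_A3: "2 \<le> n \<Longrightarrow>
    rlp (mkstd (hornP n 0) n {[0, 1]} {[0, 1, n]} {[0, 1, n]}) (mkstd fullP n {[0, 1]} {[0, 1, n]} {[0, 1, n]}) X Y p"
  and rlp_A4: "rlp (mkstd vert0P 1 UNIV UNIV UNIV) (mkstd fullP 1 UNIV UNIV UNIV) X Y p"
  and rlp_S2: "rlp (mkstd fullP 2 {} UNIV {}) (mkstd fullP 2 {} UNIV UNIV) X Y p"
  using fibration unfolding mb_fibration_def by simp_all

lemma rlp_A1_2: "rlp (mkstd (hornP 2 1) 2 {} {[0, 1, 2]} {}) (mkstd fullP 2 {} {[0, 1, 2]} {}) X Y p"
  and rlp_A1_3: "rlp (mkstd (hornP 3 1) 3 {} {[0, 1, 2]} {}) (mkstd fullP 3 {} {[0, 1, 2]} {}) X Y p"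
  and rlp_A3_2: "rlp (mkstd (hornP 2 0) 2 {[0, 1]} {[0, 1, 2]} {[0, 1, 2]})
    (mkstd fullP 2 {[0, 1]} {[0, 1, 2]} {[0, 1, 2]}) X Y p"
  and rlp_A3_3: "rlp (mkstd (hornP 3 0) 3 {[0, 1]} {[0, 1, 3]} {[0, 1, 3]})
    (mkstd fullP 3 {[0, 1]} {[0, 1, 3]} {[0, 1, 3]}) X Y p"
  using rlp_A1[of 1 2] rlp_A1[of 1 3] rlp_A3[of 2] rlp_A3[of 3] by (simp_all add: numeral_2_eq_2)

lemmas fill = rlp_fill[OF _ X_mbset Y_mbset p_smap]

lemma decorated_base:
  "\<beta> \<in> simp Y n \<Longrightarrow> \<forall>xs\<in>T. vertex_list xs 2 n \<longrightarrow> act_list Y 2 n xs \<beta> \<in> thin Y \<Longrightarrow> decorated Y n E L T \<beta>"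
  using act_list_in[OF Y_sset] by (auto simp: decorated_def marked_Y lean_Y std_simps_iff)

lemma lean_A2:
  assumes \<tau>: "\<tau> \<in> simp X 4" and lean: "\<forall>F\<in>A2T. act_list X 2 4 F \<tau> \<in> lean X"
  shows "act_list X 2 4 [0, 3, 4] \<tau> \<in> lean X" "act_list X 2 4 [0, 1, 4] \<tau> \<in> lean X"
proof -
  have "decorated X 4 {} A2T {} \<tau>" using lean by (auto simp: decorated_def)
  then have "decorated X 4 {} (A2T \<union> {[0, 3, 4], [0, 1, 4]}) {} \<tau>"
    using rlp_full_decorated[OF rlp_A2 X_mbset Y_mbset p_smap \<tau>]
      decorated_base[OF smap_in[OF p_smap \<tau>]] by simp
  then show "act_list X 2 4 [0, 3, 4] \<tau> \<in> lean X" "act_list X 2 4 [0, 1, 4] \<tau> \<in> lean X"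
    by (auto intro: decorated_lean simp: vertex_list_def)
qed

lemma degenerate_lean: "z \<in> simp X k \<Longrightarrow> vertex_list F 2 k \<Longrightarrow> \<not> distinct F \<Longrightarrow> act_list X 2 k F z \<in> lean X"
  using X_mbset by (simp add: act_list_degenerate_thin mbset_thin_lean)

lemma lean_face_023:
  assumes \<omega>: "\<omega> \<in> simp X 3"
    and lean: "act_list X 2 3 [0, 1, 2] \<omega> \<in> lean X" "act_list X 2 3 [0, 1, 3] \<omega> \<in> lean X"
      "act_list X 2 3 [1, 2, 3] \<omega> \<in> lean X"
  shows "act_list X 2 3 [0, 2, 3] \<omega> \<in> lean X"
proof -
  have s: "vertex_list [0, 1, 1, 2, 3] 4 3" by (simp add: vertex_list_def)
  define \<tau> where "\<tau> = act_list X 4 3 [0, 1, 1, 2, 3] \<omega>"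
  have \<tau>: "\<tau> \<in> simp X 4" unfolding \<tau>_def by (rule act_list_in[OF X_sset \<omega> s])
  have \<tau>_face: "act_list X 2 4 F \<tau> = act_list X 2 3 (map ((!) [0, 1, 1, 2, 3]) F) \<omega>" if "vertex_list F 2 4" for F
    unfolding \<tau>_def by (rule act_list_act_list[OF X_sset \<omega> s that])
  have "\<forall>F\<in>A2T. act_list X 2 4 F \<tau> \<in> lean X"
    unfolding A2T_def using lean degenerate_lean[OF \<omega>, of "[1, 1, 2]"] degenerate_lean[OF \<omega>, of "[0, 1, 1]"]
    by (simp add: \<tau>_face vertex_list_def)
  then show ?thesis using lean_A2(1)[OF \<tau>] \<tau>_face[of "[0, 3, 4]"] by (simp add: vertex_list_def)
qed

lemma lean_face_013:
  assumes \<omega>: "\<omega> \<in> simp X 3"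
    and lean: "act_list X 2 3 [0, 1, 2] \<omega> \<in> lean X" "act_list X 2 3 [0, 2, 3] \<omega> \<in> lean X"
      "act_list X 2 3 [1, 2, 3] \<omega> \<in> lean X"
  shows "act_list X 2 3 [0, 1, 3] \<omega> \<in> lean X"
proof -
  have s: "vertex_list [0, 1, 2, 2, 3] 4 3" by (simp add: vertex_list_def)
  define \<tau> where "\<tau> = act_list X 4 3 [0, 1, 2, 2, 3] \<omega>"
  have \<tau>: "\<tau> \<in> simp X 4" unfolding \<tau>_def by (rule act_list_in[OF X_sset \<omega> s])
  have \<tau>_face: "act_list X 2 4 F \<tau> = act_list X 2 3 (map ((!) [0, 1, 2, 2, 3]) F) \<omega>" if "vertex_list F 2 4" for F
    unfolding \<tau>_def by (rule act_list_act_list[OF X_sset \<omega> s that])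
  have "\<forall>F\<in>A2T. act_list X 2 4 F \<tau> \<in> lean X"
    unfolding A2T_def using lean degenerate_lean[OF \<omega>, of "[1, 2, 2]"]
    by (simp add: \<tau>_face vertex_list_def)
  then show ?thesis using lean_A2(2)[OF \<tau>] \<tau>_face[of "[0, 1, 4]"] by (simp add: vertex_list_def)
qed

lemma thin_if_lean_over_thin:
  assumes x: "x \<in> lean X" and px: "p 2 x \<in> thin Y"
  shows "x \<in> thin X"
proof -
  have x2: "x \<in> simp X 2" by (rule mbset_lean_in[OF X_mbset x])
  have "decorated X 2 {} UNIV {} x" using x by (simp add: decorated_triangle_iff[OF X_sset x2])
  moreover have "decorated Y 2 {} UNIV UNIV (p 2 x)"
    using px smap_in[OF p_smap x2] by (simp add: decorated_triangle_iff[OF Y_sset] lean_Y)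
  ultimately have "decorated X 2 {} UNIV UNIV x"
    by (rule rlp_full_decorated[OF rlp_S2 X_mbset Y_mbset p_smap x2])
  then show ?thesis by (simp add: decorated_triangle_iff[OF X_sset x2])
qed

lemma marked_edge_lift:
  assumes x0: "x0 \<in> simp X 0" and c: "c \<in> simp Y 1" and over: "p 0 x0 = act_list Y 0 1 [0] c"
  obtains e where "e \<in> marked X" "p 1 e = c" "act_list X 0 1 [0] e = x0"
proof -
  let ?FL = "[([0], x0)]"
  have no_edges: "\<not> distinct xs" if "xs \<in> std_simps vert0P 1 m" "0 < m" for xs m
  proof
    assume "distinct xs"
    then have "card (set xs) = Suc m" "set xs \<subseteq> {0}" using that by (auto simp: std_simps_def distinct_card vert0P_def)
    then show False using card_mono[of "{0::nat}" "set xs"] that(2) by simp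
  qed
  have FL: "face_family X 1 vert0P ?FL" using x0 by (simp add: face_family_def vert0P_def)
  moreover have "compatible_faces X 1 ?FL" by (rule compatible_faces_single[OF X_sset FL])
  moreover have "faces_cover vert0P 1 ?FL" by (auto simp: faces_cover_def std_simps_def vert0P_def)
  moreover have "faces_decorated X vert0P 1 UNIV UNIV UNIV ?FL"
    using no_edges by (auto simp: faces_decorated_def)
  moreover have "decorated Y 1 UNIV UNIV UNIV c"
    unfolding decorated_edge_iff[OF Y_sset c] marked_Y using c by simp
  moreover have "\<forall>(G, y)\<in>set ?FL. p (face_dim G) y = act_list Y (face_dim G) 1 G c" using over by simp
  ultimately obtain e where e: "e \<in> simp X 1" "p 1 e = c" "\<forall>(G, y)\<in>set ?FL. act_list X (face_dim G) 1 G e = y"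
    "decorated X 1 UNIV UNIV UNIV e"
    by (rule fill[OF rlp_A4 _ _ _ _ c])
  then show thesis using that decorated_edge_iff[OF X_sset e(1)] by simp
qed

lemma thin_outer_horn2_filler:
  assumes e: "e \<in> marked X" and k: "k \<in> simp X 1"
    and source: "act_list X 0 1 [0] e = act_list X 0 1 [0] k" and over: "p 1 e = c" "p 1 k = c"
  obtains \<zeta> where "\<zeta> \<in> thin X" "act_list X 1 2 [0, 1] \<zeta> = e" "act_list X 1 2 [0, 2] \<zeta> = k"
    "p 2 \<zeta> = act_list Y 2 1 [0, 1, 1] c"
proof -
  have e1: "e \<in> simp X 1" by (rule mbset_marked_in[OF X_mbset e])
  have c: "c \<in> simp Y 1" using smap_in[OF p_smap k] over(2) by simp
  define \<beta> where "\<beta> = act_list Y 2 1 [0, 1, 1] c"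
  have \<beta>: "\<beta> \<in> simp Y 2" unfolding \<beta>_def by (rule act_list_in[OF Y_sset c]) (simp add: vertex_list_def)
  have \<beta>_thin: "\<beta> \<in> thin Y"
    unfolding \<beta>_def by (rule act_list_degenerate_thin[OF Y_mbset c]) (simp_all add: vertex_list_def)
  let ?FL = "[([0, 1], e), ([0, 2], k)]"
  have FL: "face_family X 2 (hornP 2 0) ?FL"
    using e1 k by (auto simp: face_family_def hornP_def atMost_small)
  moreover have "compatible_faces X 2 ?FL"
    using source by (intro compatible_facesI[OF X_sset FL]) (simp add: face_act_def)
  moreover have "faces_cover (hornP 2 0) 2 ?FL"
    by (rule faces_cover_horn) (auto simp: atMost_small)
  moreover have "faces_decorated X (hornP 2 0) 2 {[0, 1]} {[0, 1, 2]} {[0, 1, 2]} ?FL"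
    using e act_list_upt[OF X_sset e1, unfolded upt_Suc_small]
    by (auto simp: faces_decorated_def face_act_def std_simps_def hornP_def atMost_small)
  moreover have "decorated Y 2 {[0, 1]} {[0, 1, 2]} {[0, 1, 2]} \<beta>"
    using \<beta>_thin act_list_upt[OF Y_sset \<beta>, unfolded upt_Suc_small] by (intro decorated_base[OF \<beta>]) simp
  moreover have "\<forall>(G, y)\<in>set ?FL. p (face_dim G) y = act_list Y (face_dim G) 2 G \<beta>"
  proof -
    have "act_list Y 1 2 F \<beta> = act_list Y 1 1 (map ((!) [0, 1, 1]) F) c" if "vertex_list F 1 2" for F
      unfolding \<beta>_def by (rule act_list_act_list[OF Y_sset c _ that]) (simp add: vertex_list_def)
    then show ?thesis
      using over act_list_upt[OF Y_sset c, unfolded upt_Suc_small] by (simp add: vertex_list_def)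
  qed
  ultimately obtain \<zeta> where \<zeta>: "\<zeta> \<in> simp X 2" "p 2 \<zeta> = \<beta>" "\<forall>(G, y)\<in>set ?FL. act_list X (face_dim G) 2 G \<zeta> = y"
    "decorated X 2 {[0, 1]} {[0, 1, 2]} {[0, 1, 2]} \<zeta>"
    by (rule fill[OF rlp_A3_2 _ _ _ _ \<beta>])
  have "\<zeta> \<in> thin X"
    using decorated_thin[OF \<zeta>(4), of "[0, 1, 2]"] act_list_upt[OF X_sset \<zeta>(1), unfolded upt_Suc_small]
    by (simp add: vertex_list_def)
  then show thesis using that \<zeta>(2,3) unfolding \<beta>_def by simp
qed

lemma outer_horn3_filler:
  assumes \<beta>: "\<beta> \<in> simp Y 3" "act_list Y 2 3 [0, 1, 3] \<beta> \<in> thin Y"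
    and a: "a \<in> simp X 2" and b: "b \<in> thin X" and r: "r \<in> simp X 2"
    and b_edge: "act_list X 1 2 [0, 1] b \<in> marked X"
    and over: "p 2 a = act_list Y 2 3 [0, 2, 3] \<beta>" "p 2 b = act_list Y 2 3 [0, 1, 3] \<beta>"
      "p 2 r = act_list Y 2 3 [0, 1, 2] \<beta>"
    and compat: "act_list X 1 2 [0, 1] r = act_list X 1 2 [0, 1] b"
      "act_list X 1 2 [0, 1] a = act_list X 1 2 [0, 2] r" "act_list X 1 2 [0, 2] a = act_list X 1 2 [0, 2] b"
  obtains \<omega> where "\<omega> \<in> simp X 3" "p 3 \<omega> = \<beta>" "act_list X 2 3 [0, 2, 3] \<omega> = a"
    "act_list X 2 3 [0, 1, 3] \<omega> = b" "act_list X 2 3 [0, 1, 2] \<omega> = r"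
proof -
  have b2: "b \<in> simp X 2" by (rule mbset_lean_in[OF X_mbset mbset_thin_lean[OF X_mbset b]])
  let ?FL = "[([0, 2, 3], a), ([0, 1, 3], b), ([0, 1, 2], r)]"
  have FL: "face_family X 3 (hornP 3 0) ?FL"
    using a b2 r by (auto simp: face_family_def hornP_def atMost_small)
  moreover have "compatible_faces X 3 ?FL"
    using compat by (intro compatible_facesI[OF X_sset FL]) (simp add: face_act_def numeral_2_eq_2)
  moreover have "faces_cover (hornP 3 0) 3 ?FL"
    by (rule faces_cover_horn) (auto simp: atMost_small)
  moreover have "faces_decorated X (hornP 3 0) 3 {[0, 1]} {[0, 1, 3]} {[0, 1, 3]} ?FL"
    using b_edge compat(1) b mbset_thin_lean[OF X_mbset b] act_list_upt[OF X_sset b2, unfolded upt_Suc_small]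
    by (auto simp: faces_decorated_def face_act_def numeral_2_eq_2)
  moreover have "decorated Y 3 {[0, 1]} {[0, 1, 3]} {[0, 1, 3]} \<beta>"
    using \<beta> by (intro decorated_base) simp_all
  ultimately obtain \<omega> where "\<omega> \<in> simp X 3" "p 3 \<omega> = \<beta>"
    "\<forall>(G, y)\<in>set ?FL. act_list X (face_dim G) 3 G \<omega> = y" "decorated X 3 {[0, 1]} {[0, 1, 3]} {[0, 1, 3]} \<omega>"
    by (rule fill[OF rlp_A3_3 _ _ _ _ \<beta>(1)]) (use over in simp_all)
  then show thesis using that by simp
qed

lemma inner_horn3_filler:
  assumes \<beta>: "\<beta> \<in> simp Y 3"
    and a: "a \<in> simp X 2" and b: "b \<in> simp X 2" and r: "r \<in> lean X"
    and over: "p 2 a = act_list Y 2 3 [1, 2, 3] \<beta>" "p 2 b = act_list Y 2 3 [0, 1, 3] \<beta>"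
      "p 2 r = act_list Y 2 3 [0, 1, 2] \<beta>"
    and compat: "act_list X 1 2 [0, 2] a = act_list X 1 2 [1, 2] b"
      "act_list X 1 2 [0, 1] a = act_list X 1 2 [1, 2] r" "act_list X 1 2 [0, 1] b = act_list X 1 2 [0, 1] r"
  obtains \<omega> where "\<omega> \<in> simp X 3" "p 3 \<omega> = \<beta>" "act_list X 2 3 [1, 2, 3] \<omega> = a"
    "act_list X 2 3 [0, 1, 3] \<omega> = b" "act_list X 2 3 [0, 1, 2] \<omega> = r"
proof -
  have r2: "r \<in> simp X 2" by (rule mbset_lean_in[OF X_mbset r])
  let ?FL = "[([1, 2, 3], a), ([0, 1, 3], b), ([0, 1, 2], r)]"
  have "hornP 3 1 {1, 2, 3}" "hornP 3 1 {0, 1, 3}" "hornP 3 1 {0, 1, 2}"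
    by (auto intro: hornP_I[of 0] hornP_I[of 2] hornP_I[of 3])
  then have FL: "face_family X 3 (hornP 3 1) ?FL"
    using a b r2 by (simp add: face_family_def)
  moreover have "compatible_faces X 3 ?FL"
    using compat by (intro compatible_facesI[OF X_sset FL]) (simp add: face_act_def numeral_2_eq_2)
  moreover have "faces_cover (hornP 3 1) 3 ?FL"
    by (rule faces_cover_horn) (auto simp: atMost_small)
  moreover have "faces_decorated X (hornP 3 1) 3 {} {[0, 1, 2]} {} ?FL"
    using r act_list_upt[OF X_sset r2, unfolded upt_Suc_small]
    by (auto simp: faces_decorated_def face_act_def numeral_2_eq_2)
  moreover have "decorated Y 3 {} {[0, 1, 2]} {} \<beta>"
    using \<beta> by (intro decorated_base) simp_all
  ultimately obtain \<omega> where "\<omega> \<in> simp X 3" "p 3 \<omega> = \<beta>"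
    "\<forall>(G, y)\<in>set ?FL. act_list X (face_dim G) 3 G \<omega> = y" "decorated X 3 {} {[0, 1, 2]} {} \<omega>"
    by (rule fill[OF rlp_A1_3 _ _ _ _ \<beta>]) (use over in simp_all)
  then show thesis using that by simp
qed

lemma lean_inner_horn2_filler:
  assumes \<beta>: "\<beta> \<in> simp Y 2" and f: "f \<in> simp X 1" and g: "g \<in> simp X 1"
    and over: "p 1 f = act_list Y 1 2 [0, 1] \<beta>" "p 1 g = act_list Y 1 2 [1, 2] \<beta>"
    and compat: "act_list X 0 1 [1] f = act_list X 0 1 [0] g"
  obtains \<rho> where "\<rho> \<in> lean X" "p 2 \<rho> = \<beta>" "act_list X 1 2 [0, 1] \<rho> = f" "act_list X 1 2 [1, 2] \<rho> = g"
proof -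
  let ?FL = "[([0, 1], f), ([1, 2], g)]"
  have "hornP 2 1 {0, 1}" "hornP 2 1 {1, 2}"
    by (auto intro: hornP_I[of 0] hornP_I[of 2])
  then have FL: "face_family X 2 (hornP 2 1) ?FL"
    using f g by (simp add: face_family_def)
  moreover have "compatible_faces X 2 ?FL"
    using compat by (intro compatible_facesI[OF X_sset FL]) (simp add: face_act_def numeral_2_eq_2)
  moreover have "faces_cover (hornP 2 1) 2 ?FL"
    by (rule faces_cover_horn) (auto simp: atMost_small)
  moreover have "faces_decorated X (hornP 2 1) 2 {} {[0, 1, 2]} {} ?FL"
    by (auto simp: faces_decorated_def std_simps_def hornP_def atMost_small)
  moreover have "decorated Y 2 {} {[0, 1, 2]} {} \<beta>"
    using \<beta> by (intro decorated_base) simp_all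
  ultimately obtain \<rho> where \<rho>: "\<rho> \<in> simp X 2" "p 2 \<rho> = \<beta>"
    "\<forall>(G, y)\<in>set ?FL. act_list X (face_dim G) 2 G \<rho> = y" "decorated X 2 {} {[0, 1, 2]} {} \<rho>"
    by (rule fill[OF rlp_A1_2 _ _ _ _ \<beta>]) (use over in simp_all)
  then show thesis using that decorated_triangle_iff[OF X_sset \<rho>(1)] by simp
qed

definition fibrewise_thin :: bool where
  "fibrewise_thin \<longleftrightarrow> (\<forall>s\<in>simp Y 0. \<forall>x\<in>simp X 2. p 2 x = act_list Y 2 0 [0, 0, 0] s \<longrightarrow> x \<in> thin X)"

lemma thin_extension_over_degenerate_edge:
  assumes \<delta>: "\<delta> \<in> simp X 2" and c: "c \<in> simp Y 1" and over: "p 2 \<delta> = act_list Y 2 1 [0, 1, 1] c"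
  obtains \<omega> where "\<omega> \<in> simp X 3" "p 3 \<omega> = act_list Y 3 1 [0, 1, 1, 1] c" "act_list X 2 3 [0, 2, 3] \<omega> = \<delta>"
    "act_list X 2 3 [0, 1, 3] \<omega> \<in> thin X" "act_list X 2 3 [0, 1, 2] \<omega> \<in> thin X"
proof -
  define h1 where "h1 = act_list X 1 2 [0, 1] \<delta>"
  define h2 where "h2 = act_list X 1 2 [0, 2] \<delta>"
  define x0 where "x0 = act_list X 0 2 [0] \<delta>"
  have h1: "h1 \<in> simp X 1" unfolding h1_def by (rule act_list_in[OF X_sset \<delta>]) (simp add: vertex_list_def)
  have h2: "h2 \<in> simp X 1" unfolding h2_def by (rule act_list_in[OF X_sset \<delta>]) (simp add: vertex_list_def)
  have x0: "x0 \<in> simp X 0" unfolding x0_def by (rule act_list_in[OF X_sset \<delta>]) (simp add: vertex_list_def)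
  have p_h1: "p 1 h1 = c" and p_h2: "p 1 h2 = c" and p_x0: "p 0 x0 = act_list Y 0 1 [0] c"
    unfolding h1_def h2_def x0_def using over c act_list_upt[OF Y_sset c]
    by (simp_all add: smap_act_list[OF p_smap \<delta>] act_list_act_list[OF Y_sset] vertex_list_def)
  obtain e where e: "e \<in> marked X" "p 1 e = c" "act_list X 0 1 [0] e = x0"
    by (rule marked_edge_lift[OF x0 c p_x0])
  have e_h1: "act_list X 0 1 [0] e = act_list X 0 1 [0] h1" and e_h2: "act_list X 0 1 [0] e = act_list X 0 1 [0] h2"
    unfolding e(3) x0_def h1_def h2_def using \<delta> by (simp_all add: act_list_act_list[OF X_sset] vertex_list_def)
  obtain \<zeta>1 where \<zeta>1: "\<zeta>1 \<in> thin X" "act_list X 1 2 [0, 1] \<zeta>1 = e" "act_list X 1 2 [0, 2] \<zeta>1 = h1"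
    "p 2 \<zeta>1 = act_list Y 2 1 [0, 1, 1] c"
    by (rule thin_outer_horn2_filler[OF e(1) h1 e_h1 e(2) p_h1])
  obtain \<zeta>2 where \<zeta>2: "\<zeta>2 \<in> thin X" "act_list X 1 2 [0, 1] \<zeta>2 = e" "act_list X 1 2 [0, 2] \<zeta>2 = h2"
    "p 2 \<zeta>2 = act_list Y 2 1 [0, 1, 1] c"
    by (rule thin_outer_horn2_filler[OF e(1) h2 e_h2 e(2) p_h2])
  have \<zeta>1_in: "\<zeta>1 \<in> simp X 2" by (rule mbset_lean_in[OF X_mbset mbset_thin_lean[OF X_mbset \<zeta>1(1)]])
  have s: "vertex_list [0, 1, 1, 1] 3 1" by (simp add: vertex_list_def)
  define \<beta> where "\<beta> = act_list Y 3 1 [0, 1, 1, 1] c"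
  have \<beta>: "\<beta> \<in> simp Y 3" unfolding \<beta>_def by (rule act_list_in[OF Y_sset c s])
  have \<beta>_face: "act_list Y 2 3 F \<beta> = act_list Y 2 1 (map ((!) [0, 1, 1, 1]) F) c" if "vertex_list F 2 3" for F
    unfolding \<beta>_def by (rule act_list_act_list[OF Y_sset c s that])
  have "act_list Y 2 3 [0, 1, 3] \<beta> \<in> thin Y"
    using \<beta>_face[of "[0, 1, 3]"] act_list_degenerate_thin[OF Y_mbset c, of "[0, 1, 1]"]
    by (simp add: vertex_list_def)
  then obtain \<omega> where "\<omega> \<in> simp X 3" "p 3 \<omega> = \<beta>" "act_list X 2 3 [0, 2, 3] \<omega> = \<delta>"
    "act_list X 2 3 [0, 1, 3] \<omega> = \<zeta>2" "act_list X 2 3 [0, 1, 2] \<omega> = \<zeta>1"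
    by (rule outer_horn3_filler[OF \<beta> _ \<delta> \<zeta>2(1) \<zeta>1_in])
      (use over \<zeta>1 \<zeta>2 e(1) h1_def h2_def \<beta>_face in \<open>simp_all add: vertex_list_def\<close>)
  then show thesis using that \<zeta>1(1) \<zeta>2(1) unfolding \<beta>_def by simp
qed

lemma lean_over_degenerate_edge:
  assumes fibres: "fibrewise_thin"
    and \<delta>: "\<delta> \<in> simp X 2" and c: "c \<in> simp Y 1" and over: "p 2 \<delta> = act_list Y 2 1 [0, 1, 1] c"
  shows "\<delta> \<in> lean X"
proof -
  obtain \<omega> where \<omega>: "\<omega> \<in> simp X 3" "p 3 \<omega> = act_list Y 3 1 [0, 1, 1, 1] c" "act_list X 2 3 [0, 2, 3] \<omega> = \<delta>"
    "act_list X 2 3 [0, 1, 3] \<omega> \<in> thin X" "act_list X 2 3 [0, 1, 2] \<omega> \<in> thin X"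
    by (rule thin_extension_over_degenerate_edge[OF \<delta> c over])
  define \<mu> where "\<mu> = act_list X 2 3 [1, 2, 3] \<omega>"
  have \<mu>: "\<mu> \<in> simp X 2" unfolding \<mu>_def by (rule act_list_in[OF X_sset \<omega>(1)]) (simp add: vertex_list_def)
  have c1: "act_list Y 0 1 [1] c \<in> simp Y 0" by (rule act_list_in[OF Y_sset c]) (simp add: vertex_list_def)
  have "p 2 \<mu> = act_list Y 2 1 [1, 1, 1] c"
    unfolding \<mu>_def using \<omega>(2) c by (simp add: smap_act_list[OF p_smap \<omega>(1)] act_list_act_list[OF Y_sset] vertex_list_def)
  also have "\<dots> = act_list Y 2 0 [0, 0, 0] (act_list Y 0 1 [1] c)"
    using c by (simp add: act_list_act_list[OF Y_sset] vertex_list_def)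
  finally have "\<mu> \<in> thin X" using fibres c1 \<mu> unfolding fibrewise_thin_def by blast
  then show ?thesis
    using lean_face_023[OF \<omega>(1)] \<omega>(3-5) mbset_thin_lean[OF X_mbset] unfolding \<mu>_def by simp
qed

lemma lean_extension_of_triangle:
  assumes \<sigma>: "\<sigma> \<in> simp X 2"
  obtains \<omega> where "\<omega> \<in> simp X 3" "p 3 \<omega> = act_list Y 3 2 [0, 1, 2, 2] (p 2 \<sigma>)" "act_list X 2 3 [0, 1, 3] \<omega> = \<sigma>"
    "act_list X 2 3 [0, 1, 2] \<omega> \<in> lean X" "act_list X 2 3 [1, 2, 3] \<omega> \<in> lean X"
proof -
  define \<beta> where "\<beta> = p 2 \<sigma>"
  have \<beta>: "\<beta> \<in> simp Y 2" unfolding \<beta>_def by (rule smap_in[OF p_smap \<sigma>])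
  define f where "f = act_list X 1 2 [0, 1] \<sigma>"
  define g where "g = act_list X 1 2 [1, 2] \<sigma>"
  have f: "f \<in> simp X 1" unfolding f_def by (rule act_list_in[OF X_sset \<sigma>]) (simp add: vertex_list_def)
  have g: "g \<in> simp X 1" unfolding g_def by (rule act_list_in[OF X_sset \<sigma>]) (simp add: vertex_list_def)
  have p_f: "p 1 f = act_list Y 1 2 [0, 1] \<beta>" and p_g: "p 1 g = act_list Y 1 2 [1, 2] \<beta>"
    unfolding f_def g_def \<beta>_def by (simp_all add: smap_act_list[OF p_smap \<sigma>] vertex_list_def)
  have fg: "act_list X 0 1 [1] f = act_list X 0 1 [0] g"
    unfolding f_def g_def using \<sigma> by (simp add: act_list_act_list[OF X_sset] vertex_list_def)
  obtain \<rho> where \<rho>: "\<rho> \<in> lean X" "p 2 \<rho> = \<beta>" "act_list X 1 2 [0, 1] \<rho> = f" "act_list X 1 2 [1, 2] \<rho> = g"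
    by (rule lean_inner_horn2_filler[OF \<beta> f g p_f p_g fg])
  define a where "a = act_list X 2 1 [0, 1, 1] g"
  have a: "a \<in> simp X 2" unfolding a_def by (rule act_list_in[OF X_sset g]) (simp add: vertex_list_def)
  have a_lean: "a \<in> lean X" unfolding a_def by (rule degenerate_lean[OF g]) (simp_all add: vertex_list_def)
  have s: "vertex_list [0, 1, 2, 2] 3 2" by (simp add: vertex_list_def)
  define \<beta>' where "\<beta>' = act_list Y 3 2 [0, 1, 2, 2] \<beta>"
  have \<beta>': "\<beta>' \<in> simp Y 3" unfolding \<beta>'_def by (rule act_list_in[OF Y_sset \<beta> s])
  have \<beta>'_face: "act_list Y 2 3 F \<beta>' = act_list Y 2 2 (map ((!) [0, 1, 2, 2]) F) \<beta>" if "vertex_list F 2 3" for F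
    unfolding \<beta>'_def by (rule act_list_act_list[OF Y_sset \<beta> s that])
  have id\<beta>: "act_list Y 2 2 [0, 1, 2] \<beta> = \<beta>" by (rule act_list_upt[OF Y_sset \<beta>, unfolded upt_Suc_small])
  have id\<rho>: "act_list X 1 1 [0, 1] g = g" by (rule act_list_upt[OF X_sset g, unfolded upt_Suc_small])
  obtain \<omega> where "\<omega> \<in> simp X 3" "p 3 \<omega> = \<beta>'" "act_list X 2 3 [1, 2, 3] \<omega> = a"
    "act_list X 2 3 [0, 1, 3] \<omega> = \<sigma>" "act_list X 2 3 [0, 1, 2] \<omega> = \<rho>"
  proof (rule inner_horn3_filler[OF \<beta>' a \<sigma> \<rho>(1)])
    show "p 2 a = act_list Y 2 3 [1, 2, 3] \<beta>'"
      unfolding a_def using \<beta>'_face[of "[1, 2, 3]"] p_g g \<beta>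
      by (simp add: smap_act_list[OF p_smap] act_list_act_list[OF Y_sset] vertex_list_def)
    show "p 2 \<sigma> = act_list Y 2 3 [0, 1, 3] \<beta>'" "p 2 \<rho> = act_list Y 2 3 [0, 1, 2] \<beta>'"
      using \<beta>'_face[of "[0, 1, 3]"] \<beta>'_face[of "[0, 1, 2]"] id\<beta> \<rho>(2) unfolding \<beta>_def
      by (simp_all add: vertex_list_def)
    show "act_list X 1 2 [0, 2] a = act_list X 1 2 [1, 2] \<sigma>" "act_list X 1 2 [0, 1] a = act_list X 1 2 [1, 2] \<rho>"
      unfolding a_def using g id\<rho> \<rho>(4) unfolding g_def by (simp_all add: act_list_act_list[OF X_sset] vertex_list_def)
    show "act_list X 1 2 [0, 1] \<sigma> = act_list X 1 2 [0, 1] \<rho>" using \<rho>(3) unfolding f_def by simp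
  qed
  then show thesis using that \<rho>(1) a_lean unfolding \<beta>'_def \<beta>_def by simp
qed

lemma lean_if_fibrewise_thin:
  assumes fibres: "fibrewise_thin" and \<sigma>: "\<sigma> \<in> simp X 2"
  shows "\<sigma> \<in> lean X"
proof -
  define \<beta> where "\<beta> = p 2 \<sigma>"
  have \<beta>: "\<beta> \<in> simp Y 2" unfolding \<beta>_def by (rule smap_in[OF p_smap \<sigma>])
  obtain \<omega> where \<omega>: "\<omega> \<in> simp X 3" "p 3 \<omega> = act_list Y 3 2 [0, 1, 2, 2] \<beta>" "act_list X 2 3 [0, 1, 3] \<omega> = \<sigma>"
    "act_list X 2 3 [0, 1, 2] \<omega> \<in> lean X" "act_list X 2 3 [1, 2, 3] \<omega> \<in> lean X"
    unfolding \<beta>_def by (rule lean_extension_of_triangle[OF \<sigma>])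
  define c where "c = act_list Y 1 2 [0, 2] \<beta>"
  have c: "c \<in> simp Y 1" unfolding c_def by (rule act_list_in[OF Y_sset \<beta>]) (simp add: vertex_list_def)
  have \<delta>: "act_list X 2 3 [0, 2, 3] \<omega> \<in> simp X 2"
    by (rule act_list_in[OF X_sset \<omega>(1)]) (simp add: vertex_list_def)
  have "p 2 (act_list X 2 3 [0, 2, 3] \<omega>) = act_list Y 2 2 [0, 2, 2] \<beta>"
    using \<omega>(2) \<beta> by (simp add: smap_act_list[OF p_smap \<omega>(1)] act_list_act_list[OF Y_sset] vertex_list_def)
  also have "\<dots> = act_list Y 2 1 [0, 1, 1] c"
    unfolding c_def using \<beta> by (simp add: act_list_act_list[OF Y_sset] vertex_list_def)
  finally have "act_list X 2 3 [0, 2, 3] \<omega> \<in> lean X"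
    using lean_over_degenerate_edge[OF fibres \<delta> c] by simp
  then show ?thesis
    using lean_face_013[OF \<omega>(1)] \<omega>(3-5) by simp
qed

theorem fibrewise_thin_iff_all_lean: "fibrewise_thin \<longleftrightarrow> simp X 2 \<subseteq> lean X"
proof
  assume "fibrewise_thin"
  then show "simp X 2 \<subseteq> lean X" using lean_if_fibrewise_thin by blast
next
  assume "simp X 2 \<subseteq> lean X"
  then show "fibrewise_thin"
    unfolding fibrewise_thin_def using thin_if_lean_over_thin act_list_degenerate_thin[OF Y_mbset, of _ 0 "[0, 0, 0]"]
    by (auto simp: vertex_list_def)
qed

end

lemma all_triangles_thin_fibre_iff:
  assumes "is_sset S" "s \<in> simp S 0"
  shows "all_triangles_thin (fibre S X p s) \<longleftrightarrow> (\<forall>x\<in>simp X 2. p 2 x = act_list S 2 0 [0, 0, 0] s \<longrightarrow> x \<in> thin X)"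
proof -
  have "act S (\<lambda>_. 0) 2 0 s = act_list S 2 0 [0, 0, 0] s"
    unfolding act_list_def by (rule sset_act_cong[OF assms(1) _ assms(2)]) (auto simp: nth_Cons' le_Suc_eq)
  then show ?thesis by (auto simp: all_triangles_thin_def fibre_def Let_def)
qed

theorem mainTheorem14:
  fixes S :: "'b sset" and TS :: "'b set" and X :: "'a mbset" and p :: "nat \<Rightarrow> 'a \<Rightarrow> 'b"
  assumes "zero_one_fibration S TS X p"
  shows "(\<forall>s \<in> simp S 0. all_triangles_thin (fibre S X p s)) \<longleftrightarrow> all_triangles_lean X"
proof -
  interpret sharp_base_fibration X "sharp_scaled S TS" p
    using assms by unfold_locales (simp_all add: zero_one_fibration_def sharp_scaled_def)
  have S: "is_sset S" using assms by (simp add: zero_one_fibration_def is_scaled_def)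
  have "(\<forall>s\<in>simp S 0. all_triangles_thin (fibre S X p s))
      \<longleftrightarrow> (\<forall>s\<in>simp S 0. \<forall>x\<in>simp X 2. p 2 x = act_list S 2 0 [0, 0, 0] s \<longrightarrow> x \<in> thin X)"
    by (rule ball_cong) (simp_all add: all_triangles_thin_fibre_iff[OF S])
  also have "\<dots> \<longleftrightarrow> fibrewise_thin"
    unfolding fibrewise_thin_def by (simp add: sharp_scaled_def act_list_def)
  finally show ?thesis
    using fibrewise_thin_iff_all_lean by (simp add: all_triangles_lean_def)
qed

end
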